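(* Let $\mathcal L_0,\mathcal L_1$ be as described in the context and $\mathcal L_N=\mathcal L_0+\mathcal P_N\mathcal L_1\mathcal P_N$. For any $c>0$, for all sufficiently large $N$, $$\sigma(\mathcal L_0+\mathcal P_N\mathcal L_1;\operatorname{ran}\mathcal P_N)\cap\{z\in\mathbb C:|z|\le cN^{k-1}\}=\sigma(\mathcal L_N;L^2(\mathbb T))\cap\{z\in\mathbb C:|z|\le cN^{k-1}\}.$$
   Context: $\mathbb T=[0,2\pi)$ with endpoints identified; $e_j(\theta)=e^{ij\theta}$, $u_j=\frac1{2\pi}\int_0^{2\pi}u\bar e_j\,d\theta$; $H^s(\mathbb T)$ the Sobolev space with norm $\|u\|_s^2=c_{|s|}\sum_j|u_j|^2\max\{1,|j|\}^{2s}$. For $N\ge1$, $N_-=\lfloor N/2\rfloor$, $N_+=\lfloor(N-1)/2\rfloor$, $\mathcal P_Nu=\sum_{j=-N_-}^{N_+}u_je_j$. Fix integers $k\ge1$, $0\le p<k$, $0\le q\le k$, $\ell\ge1$, constants $c_q,\dots,c_k\in\mathbb C$ with $c_k\ne0$, and $a_0,\dots,a_p\in H^\ell(\mathbb T)$; $\mathcal L_0u=\sum_{j=q}^kc_j\frac{d^ju}{d\theta^j}$, $\mathcal L_1u=\sum_{j=0}^pa_j\frac{d^ju}{d\theta^j}$. $\sigma(\mathcal L_0+\mathcal P_N\mathcal L_1;\operatorname{ran}\mathcal P_N)$ is the spectrum (set of eigenvalues) of the restriction of $\mathcal L_0+\mathcal P_N\mathcal L_1$ to the finite-dimensional invariant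 space $\operatorname{ran}\mathcal P_N$; $\sigma(\mathcal L_N;L^2(\mathbb T))$ is the spectrum of $\mathcal L_N$ acting on $L^2(\mathbb T)$ (with domain $H^k(\mathbb T)$). *)

theory Defs
  imports "HOL-Analysis.Analysis"
begin

text \<open>Functions on the torus T = [0,2pi) are represented by functions real => complex,
  of which only the values on [0,2pi] matter (everything is up to a.e. equality on [0,2pi]).\<close>

type_synonym cfun = "real \<Rightarrow> complex"

definition ebasis :: "int \<Rightarrow> cfun" where
  "ebasis j = (\<lambda>\<theta>. exp (\<i> * of_int j * of_real \<theta>))"

definition L2T :: "cfun set" where
  "L2T = {u. set_borel_measurable lebesgue {0..2*pi} u \<and>
             set_integrable lebesgue {0..2*pi} (\<lambda>\<theta>. (cmod (u \<theta>))\<^sup>2)}"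

definition l2normT :: "cfun \<Rightarrow> real" where
  "l2normT u = sqrt (LINT \<theta>:{0..2*pi}|lebesgue. (cmod (u \<theta>))\<^sup>2)"

definition fcoeff :: "cfun \<Rightarrow> int \<Rightarrow> complex" where
  "fcoeff u j = complex_of_real (1 / (2*pi)) *
      (LINT \<theta>:{0..2*pi}|lebesgue. u \<theta> * cnj (ebasis j \<theta>))"

definition HsT :: "nat \<Rightarrow> cfun set" where
  "HsT s = {u \<in> L2T. ((\<lambda>j. (cmod (fcoeff u j))\<^sup>2 * (max 1 (abs (real_of_int j))) ^ (2 * s)) summable_on (UNIV :: int set))}"

definition aeqT :: "cfun \<Rightarrow> cfun \<Rightarrow> bool" where
  "aeqT u v \<longleftrightarrow> (AE \<theta> in lebesgue. \<theta> \<in> {0..2*pi} \<longrightarrow> u \<theta> = v \<theta>)"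

text \<open>(Weak) j-th derivative on T, characterised in Fourier variables: the L^2 function
  whose coefficients are (i m)^j u_m (exists for u in H^j).\<close>
definition derivT :: "nat \<Rightarrow> cfun \<Rightarrow> cfun" where
  "derivT j u = (SOME v. v \<in> L2T \<and> (\<forall>m. fcoeff v m = (\<i> * of_int m) ^ j * fcoeff u m))"

definition Nminus :: "nat \<Rightarrow> int" where "Nminus N = int (N div 2)"
definition Nplus :: "nat \<Rightarrow> int" where "Nplus N = (int N - 1) div 2"

definition projN :: "nat \<Rightarrow> cfun \<Rightarrow> cfun" where
  "projN N u = (\<lambda>\<theta>. \<Sum>j\<in>{- Nminus N .. Nplus N}. fcoeff u j * ebasis j \<theta>)"

definition ranP :: "nat \<Rightarrow> cfun set" where
  "ranP N = {u. \<exists>b. u = (\<lambda>\<theta>. \<Sum>j\<in>{- Nminus N .. Nplus N}. b j * ebasis j \<theta>)}"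

definition L0op :: "nat \<Rightarrow> nat \<Rightarrow> (nat \<Rightarrow> complex) \<Rightarrow> cfun \<Rightarrow> cfun" where
  "L0op q k c u = (\<lambda>\<theta>. \<Sum>j\<in>{q..k}. c j * derivT j u \<theta>)"

definition L1op :: "nat \<Rightarrow> (nat \<Rightarrow> cfun) \<Rightarrow> cfun \<Rightarrow> cfun" where
  "L1op p a u = (\<lambda>\<theta>. \<Sum>j\<in>{0..p}. a j \<theta> * derivT j u \<theta>)"

text \<open>Spectrum of an operator L acting in L^2(T) with domain D: complement of the
  resolvent set (L - z : D -> L^2 bijective, modulo a.e. equality, with bounded inverse).\<close>
definition spectrumL2 :: "(cfun \<Rightarrow> cfun) \<Rightarrow> cfun set \<Rightarrow> complex set" where
  "spectrumL2 L D = {z. \<not> (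
      (\<forall>f\<in>L2T. \<exists>u\<in>D. aeqT (\<lambda>\<theta>. L u \<theta> - z * u \<theta>) f) \<and>
      (\<forall>u\<in>D. aeqT (\<lambda>\<theta>. L u \<theta> - z * u \<theta>) (\<lambda>_. 0) \<longrightarrow> aeqT u (\<lambda>_. 0)) \<and>
      (\<exists>C. \<forall>u\<in>D. l2normT u \<le> C * l2normT (\<lambda>\<theta>. L u \<theta> - z * u \<theta>)))}"

definition eigs_on :: "(cfun \<Rightarrow> cfun) \<Rightarrow> cfun set \<Rightarrow> complex set" where
  "eigs_on M V = {z. \<exists>u\<in>V. \<not> aeqT u (\<lambda>_. 0) \<and> aeqT (M u) (\<lambda>\<theta>. z * u \<theta>)}"

end

theory Submission
  imports Defs "Jordan_Normal_Form.Determinant"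
begin

text \<open>
  In the Fourier basis \<open>\<L>\<^sub>0\<close> is the multiplier \<open>symbol q k c m\<close>, a polynomial of degree \<open>k\<close>
  in \<open>m\<close>, and \<open>\<L>\<^sub>N = \<L>\<^sub>0 + P\<^sub>N \<L>\<^sub>1 P\<^sub>N\<close> differs from it only by a matrix block on the
  frequency window \<open>ran P\<^sub>N\<close>. Outside the window \<open>|m| \<ge> N/2\<close>, so for large \<open>N\<close> the symbol
  exceeds \<open>c N\<^sup>k\<^sup>-\<^sup>1 + 1\<close> there; for \<open>|z| \<le> c N\<^sup>k\<^sup>-\<^sup>1\<close> the operator \<open>\<L>\<^sub>N - z\<close> is therefore
  boundedly invertible off the window, gaining the \<open>k\<close> derivatives needed to land in \<open>H\<^sup>k\<close>.
  Hence such a \<open>z\<close> lies in the spectrum exactly when the window block of \<open>\<L>\<^sub>N - z\<close> is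
  singular, i.e. when \<open>z\<close> is an eigenvalue of \<open>\<L>\<^sub>0 + P\<^sub>N \<L>\<^sub>1\<close> on \<open>ran P\<^sub>N\<close>. Turning these
  coefficient computations into statements about \<open>L\<^sup>2\<close> needs that Fourier coefficients determine
  a function (via Stone--Weierstrass on the circle), Riesz--Fischer and Parseval.
\<close>

section \<open>Square-integrable functions on the torus\<close>

abbreviation torus :: "real set" where "torus \<equiv> {0..2*pi}"
abbreviation \<mu> :: "real measure" where "\<mu> \<equiv> lebesgue_on torus"

lemma space_torus_measure [simp]: "space \<mu> = torus"
  by (simp add: space_restrict_space)

lemma sets_torus_measure_iff: "A \<in> sets \<mu> \<longleftrightarrow> A \<subseteq> torus \<and> A \<in> sets lebesgue"
  by (simp add: sets_restrict_space_iff)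

lemma finite_measure_torus: "finite_measure \<mu>"
  by (rule finite_measure_lebesgue_on) simp

lemma L2T_iff: "u \<in> L2T \<longleftrightarrow> u \<in> borel_measurable \<mu> \<and> integrable \<mu> (\<lambda>\<theta>. (cmod (u \<theta>))\<^sup>2)"
  unfolding L2T_def set_borel_measurable_def set_integrable_def
  by (simp add: borel_measurable_restrict_space_iff integrable_restrict_space)

lemma fcoeff_eq_integral:
  "fcoeff u j = complex_of_real (1/(2*pi)) * integral\<^sup>L \<mu> (\<lambda>\<theta>. u \<theta> * cnj (ebasis j \<theta>))"
  unfolding fcoeff_def set_lebesgue_integral_def by (simp add: integral_restrict_space)

lemma aeqT_iff_AE: "aeqT u v \<longleftrightarrow> (AE \<theta> in \<mu>. u \<theta> = v \<theta>)"
  unfolding aeqT_def by (simp add: AE_restrict_space_iff)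

lemma l2normT_eq: "l2normT u = sqrt (integral\<^sup>L \<mu> (\<lambda>\<theta>. (cmod (u \<theta>))\<^sup>2))"
  unfolding l2normT_def set_lebesgue_integral_def by (simp add: integral_restrict_space)

lemma AE_torus_interior: "AE x in \<mu>. x \<in> {0<..<2*pi}"
proof -
  have "{0, 2*pi} \<in> null_sets lebesgue"
    by (rule null_sets_completionI) (rule finite_imp_null_set_lborel, simp)
  then have "AE x in lebesgue. x \<in> torus \<longrightarrow> x \<in> {0<..<2*pi}"
    by (rule AE_not_in[THEN eventually_mono]) auto
  then show ?thesis by (subst AE_restrict_space_iff) simp_all
qed

lemma continuous_on_torus_measurable: "continuous_on torus f \<Longrightarrow> f \<in> borel_measurable \<mu>"
  by (rule continuous_imp_measurable_on_sets_lebesgue) auto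

lemma continuous_on_torus_integral:
  fixes f :: "real \<Rightarrow> 'a::euclidean_space"
  assumes "continuous_on torus f"
  shows "integrable \<mu> f" "integral\<^sup>L \<mu> f = integral torus f"
proof -
  show integrable: "integrable \<mu> f" by (rule continuous_imp_integrable_real[OF assms])
  show "integral\<^sup>L \<mu> f = integral torus f" by (rule lebesgue_integral_eq_integral[OF integrable]) simp
qed

lemma integral_const_torus: "integral\<^sup>L \<mu> (\<lambda>_. c::real) = 2*pi*c"
  using continuous_on_torus_integral(2)[of "\<lambda>_. c"] by (simp add: integral_const_real)

lemma measure_torus [simp]: "measure \<mu> torus = 2*pi"
  using integral_const_torus[of 1] by simp

lemma integrable_bounded_torus:
  fixes f :: "real \<Rightarrow> 'a::{banach,second_countable_topology}"
  assumes "f \<in> borel_measurable \<mu>" "\<And>x. x \<in> torus \<Longrightarrow> norm (f x) \<le> B"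
  shows "integrable \<mu> f"
  by (rule finite_measure.integrable_const_bound[OF finite_measure_torus, of f B])
    (use assms in \<open>auto intro!: AE_I2\<close>)

lemma integrable_mult_bounded:
  fixes f g :: "real \<Rightarrow> complex"
  assumes "integrable \<mu> f" "g \<in> borel_measurable \<mu>" "\<And>x. x \<in> torus \<Longrightarrow> norm (g x) \<le> B"
  shows "integrable \<mu> (\<lambda>x. f x * g x)"
proof (rule Bochner_Integration.integrable_bound)
  show "integrable \<mu> (\<lambda>x. B * norm (f x))" using assms(1) by auto
  show "(\<lambda>x. f x * g x) \<in> borel_measurable \<mu>"
    using borel_measurable_integrable[OF assms(1)] assms(2) by measurable
  show "AE x in \<mu>. norm (f x * g x) \<le> norm (B * norm (f x))"
  proof (rule AE_I2)
    fix x assume "x \<in> space \<mu>"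
    then have "norm (f x * g x) \<le> norm (f x) * \<bar>B\<bar>"
      using assms(3) by (auto simp: norm_mult intro!: mult_left_mono order_trans[OF _ abs_ge_self])
    then show "norm (f x * g x) \<le> norm (B * norm (f x))" by (simp add: abs_mult mult.commute)
  qed
qed

lemma measurable_norm_sq [measurable]:
  "u \<in> borel_measurable \<mu> \<Longrightarrow> (\<lambda>x. (cmod (u x))\<^sup>2) \<in> borel_measurable \<mu>"
  by measurable

lemma cnj_borel_measurable [measurable]: "cnj \<in> borel_measurable borel"
  by (intro borel_measurable_continuous_onI continuous_intros)

lemma L2T_measurable: "u \<in> L2T \<Longrightarrow> u \<in> borel_measurable \<mu>"
  by (simp add: L2T_iff)

lemma L2T_integrable_norm_sq: "u \<in> L2T \<Longrightarrow> integrable \<mu> (\<lambda>\<theta>. (cmod (u \<theta>))\<^sup>2)"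
  by (simp add: L2T_iff)

lemma integrable_const_torus: "integrable \<mu> (\<lambda>_. c::real)"
  by (rule integrable_bounded_torus[where B="\<bar>c\<bar>"]) auto

lemma norm_le_one_plus_norm_sq: "norm x \<le> 1 + (norm x)\<^sup>2"
proof -
  have "2 * norm x \<le> (norm x)\<^sup>2 + 1" using sum_squares_bound[of "norm x" 1] by simp
  then show ?thesis using norm_ge_zero[of x] by linarith
qed

lemma norm_mult_le_sum_norm_sq: "cmod (a * b) \<le> (cmod a)\<^sup>2 + (cmod b)\<^sup>2"
proof -
  have "2 * (cmod a * cmod b) \<le> (cmod a)\<^sup>2 + (cmod b)\<^sup>2"
    using sum_squares_bound[of "cmod a" "cmod b"] by (simp add: mult.assoc)
  then show ?thesis using mult_nonneg_nonneg[OF norm_ge_zero norm_ge_zero, of a b] unfolding norm_mult by linarith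
qed

lemma L2T_integrable:
  assumes "u \<in> L2T" shows "integrable \<mu> u"
proof (rule Bochner_Integration.integrable_bound)
  show "integrable \<mu> (\<lambda>x. 1 + (cmod (u x))\<^sup>2)"
    using integrable_const_torus L2T_integrable_norm_sq[OF assms] by (rule Bochner_Integration.integrable_add)
  show "AE x in \<mu>. norm (u x) \<le> norm (1 + (cmod (u x))\<^sup>2)"
    using norm_le_one_plus_norm_sq by (intro AE_I2) simp
qed (rule L2T_measurable[OF assms])

lemma L2T_mult_integrable:
  assumes "u \<in> L2T" "v \<in> L2T" shows "integrable \<mu> (\<lambda>x. u x * v x)"
proof (rule Bochner_Integration.integrable_bound)
  show "integrable \<mu> (\<lambda>x. (cmod (u x))\<^sup>2 + (cmod (v x))\<^sup>2)"
    using assms by (intro Bochner_Integration.integrable_add L2T_integrable_norm_sq)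
  show "(\<lambda>x. u x * v x) \<in> borel_measurable \<mu>"
    using L2T_measurable[OF assms(1)] L2T_measurable[OF assms(2)] by measurable
  show "AE x in \<mu>. norm (u x * v x) \<le> norm ((cmod (u x))\<^sup>2 + (cmod (v x))\<^sup>2)"
    using norm_mult_le_sum_norm_sq by (intro AE_I2) simp
qed

lemma L2T_cnj: "u \<in> L2T \<Longrightarrow> (\<lambda>x. cnj (u x)) \<in> L2T"
  unfolding L2T_iff by (auto intro: measurable_compose[OF _ cnj_borel_measurable])

lemma L2T_mult_bounded:
  assumes "u \<in> L2T" "g \<in> borel_measurable \<mu>" "\<And>x. x \<in> torus \<Longrightarrow> norm (g x) \<le> B"
  shows "(\<lambda>x. g x * u x) \<in> L2T"
proof -
  have gu: "(\<lambda>x. g x * u x) \<in> borel_measurable \<mu>"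
    using L2T_measurable[OF assms(1)] assms(2) by measurable
  have "integrable \<mu> (\<lambda>x. (cmod (g x * u x))\<^sup>2)"
  proof (rule Bochner_Integration.integrable_bound)
    show "integrable \<mu> (\<lambda>x. B\<^sup>2 * (cmod (u x))\<^sup>2)" using L2T_integrable_norm_sq[OF assms(1)] by simp
    show "AE x in \<mu>. norm ((cmod (g x * u x))\<^sup>2) \<le> norm (B\<^sup>2 * (cmod (u x))\<^sup>2)"
    proof (rule AE_I2)
      fix x assume "x \<in> space \<mu>"
      then have "(cmod (g x))\<^sup>2 \<le> B\<^sup>2" using assms(3) by (intro power_mono) auto
      then show "norm ((cmod (g x * u x))\<^sup>2) \<le> norm (B\<^sup>2 * (cmod (u x))\<^sup>2)"
        by (simp add: norm_mult power_mult_distrib mult_right_mono)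
    qed
  qed (use gu in measurable)
  with gu show ?thesis by (simp add: L2T_iff)
qed

lemma L2T_cmult: "u \<in> L2T \<Longrightarrow> (\<lambda>x. c * u x) \<in> L2T"
  using L2T_mult_bounded[of u "\<lambda>_. c" "cmod c"] by simp

lemma L2T_add:
  assumes "u \<in> L2T" "v \<in> L2T" shows "(\<lambda>x. u x + v x) \<in> L2T"
proof -
  have uv: "(\<lambda>x. u x + v x) \<in> borel_measurable \<mu>"
    using L2T_measurable[OF assms(1)] L2T_measurable[OF assms(2)] by measurable
  have "integrable \<mu> (\<lambda>x. (cmod (u x + v x))\<^sup>2)"
  proof (rule Bochner_Integration.integrable_bound)
    show "integrable \<mu> (\<lambda>x. 2 * (cmod (u x))\<^sup>2 + 2 * (cmod (v x))\<^sup>2)"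
      using L2T_integrable_norm_sq[OF assms(1)] L2T_integrable_norm_sq[OF assms(2)] by simp
    show "AE x in \<mu>. norm ((cmod (u x + v x))\<^sup>2) \<le> norm (2 * (cmod (u x))\<^sup>2 + 2 * (cmod (v x))\<^sup>2)"
    proof (rule AE_I2)
      fix x
      have "(cmod (u x + v x))\<^sup>2 \<le> (cmod (u x) + cmod (v x))\<^sup>2"
        by (rule power_mono[OF norm_triangle_ineq]) simp
      also have "\<dots> \<le> 2 * (cmod (u x))\<^sup>2 + 2 * (cmod (v x))\<^sup>2"
        using sum_squares_bound[of "cmod (u x)" "cmod (v x)"] by (simp add: power2_sum)
      finally show "norm ((cmod (u x + v x))\<^sup>2) \<le> norm (2 * (cmod (u x))\<^sup>2 + 2 * (cmod (v x))\<^sup>2)"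
        by simp
    qed
  qed (use uv in measurable)
  with uv show ?thesis by (simp add: L2T_iff)
qed

lemma L2T_diff: "u \<in> L2T \<Longrightarrow> v \<in> L2T \<Longrightarrow> (\<lambda>x. u x - v x) \<in> L2T"
  using L2T_add[of u "\<lambda>x. (-1) * v x"] L2T_cmult[of v "-1"] by simp

lemma L2T_zero: "(\<lambda>x. 0) \<in> L2T"
  by (simp add: L2T_iff)

lemma L2T_sum: "finite F \<Longrightarrow> (\<And>i. i \<in> F \<Longrightarrow> f i \<in> L2T) \<Longrightarrow> (\<lambda>x. \<Sum>i\<in>F. f i x) \<in> L2T"
  by (induction F rule: finite_induct) (auto simp: L2T_zero intro: L2T_add)

text \<open>A square-root-free substitute for Cauchy--Schwarz.\<close>
lemma integral_norm_le_L2: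
  assumes "h \<in> L2T" "\<delta> > 0"
  shows "integral\<^sup>L \<mu> (\<lambda>x. cmod (h x)) \<le> 2*pi*\<delta> + integral\<^sup>L \<mu> (\<lambda>x. (cmod (h x))\<^sup>2) / \<delta>"
proof -
  have pointwise: "cmod (h x) \<le> \<delta> + (cmod (h x))\<^sup>2 / \<delta>" for x
  proof -
    have "cmod (h x) * \<delta> \<le> \<delta> * \<delta> + (cmod (h x))\<^sup>2"
      using norm_mult_le_sum_norm_sq[of "h x" \<delta>] assms(2) by (simp add: norm_mult power2_eq_square)
    then show ?thesis using assms(2) by (simp add: field_simps)
  qed
  have "integral\<^sup>L \<mu> (\<lambda>x. cmod (h x)) \<le> integral\<^sup>L \<mu> (\<lambda>x. \<delta> + (cmod (h x))\<^sup>2 / \<delta>)"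
    using L2T_integrable[OF assms(1)] L2T_integrable_norm_sq[OF assms(1)] integrable_const_torus pointwise
    by (intro integral_mono) auto
  also have "\<dots> = 2*pi*\<delta> + integral\<^sup>L \<mu> (\<lambda>x. (cmod (h x))\<^sup>2) / \<delta>"
    using L2T_integrable_norm_sq[OF assms(1)] integrable_const_torus
    by (simp add: integral_const_torus)
  finally show ?thesis .
qed

section \<open>Fourier coefficients\<close>

lemma ebasis_cnj: "cnj (ebasis j \<theta>) = ebasis (-j) \<theta>"
  unfolding ebasis_def by (simp add: exp_cnj)

lemma ebasis_mult: "ebasis j \<theta> * ebasis m \<theta> = ebasis (j+m) \<theta>"
  unfolding ebasis_def by (simp add: exp_add[symmetric] algebra_simps)

lemma ebasis_eq_cis: "ebasis j \<theta> = cis (of_int j * \<theta>)"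
  by (simp add: ebasis_def cis_conv_exp mult_ac)

lemma norm_ebasis [simp]: "cmod (ebasis j \<theta>) = 1"
  unfolding ebasis_def by (simp add: norm_exp_eq_Re)

lemma continuous_on_ebasis [continuous_intros]: "continuous_on A (ebasis j)"
  unfolding ebasis_def by (intro continuous_intros)

lemma ebasis_measurable [measurable]: "ebasis j \<in> borel_measurable \<mu>"
  by (rule continuous_on_torus_measurable) (intro continuous_intros)

lemma integral_ebasis: "integral\<^sup>L \<mu> (ebasis j) = (if j = 0 then 2*pi else 0)"
proof (cases "j = 0")
  case True
  then show ?thesis
    by (simp add: ebasis_def scaleR_conv_of_real)
next
  case False
  define F where "F = (\<lambda>\<theta>::real. exp (\<i> * of_int j * of_real \<theta>) / (\<i> * of_int j))"
  have "(F has_vector_derivative ebasis j x) (at x within torus)" for x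
  proof -
    have "((\<lambda>z. exp (\<i> * of_int j * z) / (\<i> * of_int j)) has_field_derivative
            exp (\<i> * of_int j * of_real x)) (at (of_real x))"
      using False by (auto intro!: derivative_eq_intros simp: field_simps)
    from has_vector_derivative_real_field[OF this] show ?thesis
      unfolding F_def ebasis_def .
  qed
  then have "(ebasis j has_integral F (2*pi) - F 0) torus"
    by (intro fundamental_theorem_of_calculus) auto
  moreover have "exp (\<i> * of_int j * of_real (2*pi)) = 1"
    using exp_integer_2pi[of "of_int j"] by (simp add: algebra_simps)
  ultimately have "(ebasis j has_integral 0) torus" by (simp add: F_def)
  then show ?thesis
    using False continuous_on_torus_integral(2)[of "ebasis j"]
    by (simp add: integral_unique continuous_on_ebasis)
qed

lemma integral_ebasis_cnj_ebasis:
  "integral\<^sup>L \<mu> (\<lambda>\<theta>. ebasis j \<theta> * cnj (ebasis m \<theta>)) = (if j = m then 2*pi else 0)"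
  using integral_ebasis[of "j - m"] by (simp add: ebasis_cnj ebasis_mult)

lemma L2T_ebasis: "ebasis j \<in> L2T"
  by (simp add: L2T_iff integrable_const_torus)

lemma L2T_trig_sum: "finite F \<Longrightarrow> (\<lambda>x. \<Sum>n\<in>F. b n * ebasis n x) \<in> L2T"
  by (intro L2T_sum L2T_cmult L2T_ebasis)

lemma integrable_mult_cnj_ebasis:
  "integrable \<mu> u \<Longrightarrow> integrable \<mu> (\<lambda>\<theta>. u \<theta> * cnj (ebasis j \<theta>))"
  by (rule integrable_mult_bounded[where B=1]) auto

lemma integrable_mult_ebasis: "integrable \<mu> u \<Longrightarrow> integrable \<mu> (\<lambda>\<theta>. u \<theta> * ebasis j \<theta>)"
  by (rule integrable_mult_bounded[where B=1]) auto

lemma integral_mult_cnj_ebasis: "integral\<^sup>L \<mu> (\<lambda>\<theta>. u \<theta> * cnj (ebasis j \<theta>)) = 2 * pi * fcoeff u j"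
  by (simp add: fcoeff_eq_integral)

lemma fcoeff_add:
  assumes "integrable \<mu> u" "integrable \<mu> v"
  shows "fcoeff (\<lambda>x. u x + v x) j = fcoeff u j + fcoeff v j"
  using integrable_mult_cnj_ebasis[OF assms(1), of j] integrable_mult_cnj_ebasis[OF assms(2), of j]
  by (simp add: fcoeff_eq_integral distrib_right distrib_left)

lemma fcoeff_cmult: "fcoeff (\<lambda>x. c * u x) j = c * fcoeff u j"
  by (simp add: fcoeff_eq_integral mult.assoc)

lemma fcoeff_diff:
  assumes "integrable \<mu> u" "integrable \<mu> v"
  shows "fcoeff (\<lambda>x. u x - v x) j = fcoeff u j - fcoeff v j"
  using fcoeff_add[OF assms(1), of "\<lambda>x. (-1) * v x" j] fcoeff_cmult[of "-1" v j] assms(2)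
  by simp

lemma fcoeff_zero [simp]: "fcoeff (\<lambda>_. 0) m = 0"
  by (simp add: fcoeff_eq_integral)

lemma fcoeff_sum:
  assumes "finite F" "\<And>i. i \<in> F \<Longrightarrow> integrable \<mu> (f i)"
  shows "fcoeff (\<lambda>x. \<Sum>i\<in>F. f i x) j = (\<Sum>i\<in>F. fcoeff (f i) j)"
  using assms
proof (induction F rule: finite_induct)
  case (insert a F)
  then have "fcoeff (\<lambda>x. f a x + (\<Sum>i\<in>F. f i x)) j = fcoeff (f a) j + fcoeff (\<lambda>x. \<Sum>i\<in>F. f i x) j"
    by (intro fcoeff_add) auto
  with insert show ?case by simp
qed simp

lemma fcoeff_ebasis: "fcoeff (ebasis n) m = (if n = m then 1 else 0)"
  by (simp add: fcoeff_eq_integral integral_ebasis_cnj_ebasis)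

lemma fcoeff_trig_sum:
  assumes "finite F"
  shows "fcoeff (\<lambda>\<theta>. \<Sum>n\<in>F. b n * ebasis n \<theta>) m = (if m \<in> F then b m else 0)"
proof -
  have "fcoeff (\<lambda>\<theta>. \<Sum>n\<in>F. b n * ebasis n \<theta>) m = (\<Sum>n\<in>F. b n * (if n = m then 1 else 0))"
    using assms L2T_integrable[OF L2T_ebasis]
    by (simp add: fcoeff_sum fcoeff_cmult fcoeff_ebasis)
  also have "\<dots> = (if m \<in> F then b m else 0)"
    using assms by (simp add: if_distrib sum.delta' cong: if_cong)
  finally show ?thesis .
qed

lemma fcoeff_cong_AE:
  assumes "u \<in> borel_measurable \<mu>" "v \<in> borel_measurable \<mu>" "AE x in \<mu>. u x = v x"
  shows "fcoeff u j = fcoeff v j"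
proof -
  have "integral\<^sup>L \<mu> (\<lambda>\<theta>. u \<theta> * cnj (ebasis j \<theta>)) = integral\<^sup>L \<mu> (\<lambda>\<theta>. v \<theta> * cnj (ebasis j \<theta>))"
    by (rule integral_cong_AE) (use assms in \<open>auto elim: eventually_mono\<close>)
  then show ?thesis by (simp add: fcoeff_eq_integral)
qed

lemma fcoeff_eq_0_if_aeqT_0:
  assumes "g \<in> borel_measurable \<mu>" "aeqT g (\<lambda>_. 0)"
  shows "fcoeff g m = 0"
  using fcoeff_cong_AE[OF assms(1), of "\<lambda>_. 0" m] assms(2) by (simp add: aeqT_iff_AE)

lemma integral_norm_sq_complex:
  "complex_of_real (integral\<^sup>L \<mu> (\<lambda>x. (cmod (f x))\<^sup>2)) = integral\<^sup>L \<mu> (\<lambda>x. f x * cnj (f x))"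
proof -
  have "(\<lambda>x. complex_of_real ((cmod (f x))\<^sup>2)) = (\<lambda>x. f x * cnj (f x))"
    by (rule ext) (rule complex_norm_square)
  then show ?thesis by (metis integral_complex_of_real)
qed

lemma sum_cnj_mult_self: "(\<Sum>j\<in>F. cnj (b j) * b j) = complex_of_real (\<Sum>j\<in>F. (cmod (b j))\<^sup>2)"
proof -
  have "cnj (b j) * b j = complex_of_real ((cmod (b j))\<^sup>2)" for j
    by (subst complex_norm_square) (simp add: mult.commute)
  then show ?thesis by (simp only: of_real_sum)
qed

lemma integral_mult_cnj_trig_sum:
  assumes "integrable \<mu> u" "finite F"
  shows "integral\<^sup>L \<mu> (\<lambda>x. u x * cnj (\<Sum>j\<in>F. b j * ebasis j x)) = 2 * pi * (\<Sum>j\<in>F. cnj (b j) * fcoeff u j)"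
proof -
  have "integral\<^sup>L \<mu> (\<lambda>x. u x * cnj (\<Sum>j\<in>F. b j * ebasis j x)) =
        integral\<^sup>L \<mu> (\<lambda>x. \<Sum>j\<in>F. cnj (b j) * (u x * cnj (ebasis j x)))"
    by (simp add: sum_distrib_left mult_ac)
  also have "\<dots> = (\<Sum>j\<in>F. cnj (b j) * (2 * pi * fcoeff u j))"
    using integrable_mult_cnj_ebasis[OF assms(1)] by (simp add: integral_mult_cnj_ebasis)
  finally show ?thesis by (simp add: sum_distrib_left mult_ac)
qed

lemma integral_norm_sq_trig_sum:
  assumes "finite F"
  shows "integral\<^sup>L \<mu> (\<lambda>x. (cmod (\<Sum>j\<in>F. b j * ebasis j x))\<^sup>2) = 2 * pi * (\<Sum>j\<in>F. (cmod (b j))\<^sup>2)"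
proof -
  let ?T = "\<lambda>x. \<Sum>j\<in>F. b j * ebasis j x"
  have "complex_of_real (integral\<^sup>L \<mu> (\<lambda>x. (cmod (?T x))\<^sup>2)) = 2 * pi * (\<Sum>j\<in>F. cnj (b j) * fcoeff ?T j)"
    unfolding integral_norm_sq_complex
    by (rule integral_mult_cnj_trig_sum[OF L2T_integrable[OF L2T_trig_sum[OF assms]] assms])
  also have "\<dots> = complex_of_real (2 * pi * (\<Sum>j\<in>F. (cmod (b j))\<^sup>2))"
    using assms by (simp add: fcoeff_trig_sum sum_cnj_mult_self)
  finally show ?thesis by (simp only: of_real_eq_iff)
qed

lemma bessel_identity:
  assumes "u \<in> L2T" "finite F"
  defines "T \<equiv> (\<lambda>x. \<Sum>j\<in>F. fcoeff u j * ebasis j x)"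
  shows "integral\<^sup>L \<mu> (\<lambda>x. (cmod (u x - T x))\<^sup>2)
           = integral\<^sup>L \<mu> (\<lambda>x. (cmod (u x))\<^sup>2) - 2 * pi * (\<Sum>j\<in>F. (cmod (fcoeff u j))\<^sup>2)"
proof -
  have T: "T \<in> L2T" unfolding T_def by (rule L2T_trig_sum[OF assms(2)])
  let ?s = "2 * pi * (\<Sum>j\<in>F. (cmod (fcoeff u j))\<^sup>2)"
  have uT: "integral\<^sup>L \<mu> (\<lambda>x. u x * cnj (T x)) = complex_of_real ?s"
    unfolding T_def using integral_mult_cnj_trig_sum[OF L2T_integrable[OF assms(1)] assms(2), of "fcoeff u"]
    by (simp add: sum_cnj_mult_self)
  have Tu: "integral\<^sup>L \<mu> (\<lambda>x. T x * cnj (u x)) = complex_of_real ?s"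
    using arg_cong[OF uT, of cnj] Bochner_Integration.integral_cnj[of \<mu> "\<lambda>x. u x * cnj (T x)"]
    by (simp add: mult.commute)
  have TT: "integral\<^sup>L \<mu> (\<lambda>x. T x * cnj (T x)) = complex_of_real ?s"
    using integral_norm_sq_trig_sum[OF assms(2), of "fcoeff u"] integral_norm_sq_complex[of T]
    unfolding T_def by simp
  have "complex_of_real (integral\<^sup>L \<mu> (\<lambda>x. (cmod (u x - T x))\<^sup>2))
        = integral\<^sup>L \<mu> (\<lambda>x. (u x * cnj (u x) - u x * cnj (T x)) - (T x * cnj (u x) - T x * cnj (T x)))"
    unfolding integral_norm_sq_complex by (simp add: algebra_simps)
  also have "\<dots> = complex_of_real (integral\<^sup>L \<mu> (\<lambda>x. (cmod (u x))\<^sup>2)) - complex_of_real ?s"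
    using assms(1) T uT Tu TT
    by (simp add: L2T_mult_integrable L2T_cnj integral_norm_sq_complex)
  finally show ?thesis by (simp only: of_real_diff[symmetric] of_real_eq_iff)
qed

lemma bessel_inequality:
  assumes "u \<in> L2T" "finite F"
  shows "2 * pi * (\<Sum>j\<in>F. (cmod (fcoeff u j))\<^sup>2) \<le> integral\<^sup>L \<mu> (\<lambda>x. (cmod (u x))\<^sup>2)"
proof -
  have "0 \<le> integral\<^sup>L \<mu> (\<lambda>x. (cmod (u x - (\<Sum>j\<in>F. fcoeff u j * ebasis j x)))\<^sup>2)"
    by (rule integral_nonneg_AE) simp
  then show ?thesis using bessel_identity[OF assms] by simp
qed

lemma bessel_summable:
  assumes "u \<in> L2T"
  shows "(\<lambda>j. (cmod (fcoeff u j))\<^sup>2) summable_on UNIV"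
    and "2*pi*infsum (\<lambda>j. (cmod (fcoeff u j))\<^sup>2) UNIV \<le> integral\<^sup>L \<mu> (\<lambda>x. (cmod (u x))\<^sup>2)"
proof -
  have bound: "(\<Sum>j\<in>F. (cmod (fcoeff u j))\<^sup>2) \<le> integral\<^sup>L \<mu> (\<lambda>x. (cmod (u x))\<^sup>2) / (2*pi)"
    if "finite F" for F
    using bessel_inequality[OF assms that] by (simp add: field_simps)
  show summable: "(\<lambda>j. (cmod (fcoeff u j))\<^sup>2) summable_on UNIV"
    by (rule nonneg_bdd_above_summable_on) (use bound in \<open>auto intro!: bdd_aboveI\<close>)
  have "infsum (\<lambda>j. (cmod (fcoeff u j))\<^sup>2) UNIV \<le> integral\<^sup>L \<mu> (\<lambda>x. (cmod (u x))\<^sup>2) / (2*pi)"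
    by (rule infsum_le_finite_sums[OF summable]) (use bound in auto)
  then show "2*pi*infsum (\<lambda>j. (cmod (fcoeff u j))\<^sup>2) UNIV \<le> integral\<^sup>L \<mu> (\<lambda>x. (cmod (u x))\<^sup>2)"
    by (simp add: field_simps)
qed

section \<open>Uniqueness of Fourier coefficients\<close>

text \<open>Trigonometric polynomials as lists of (frequency, coefficient) pairs, which makes their
  products explicit.\<close>
definition trig_poly :: "(int \<times> complex) list \<Rightarrow> real \<Rightarrow> complex" where
  "trig_poly xs \<theta> = (\<Sum>(j,c)\<leftarrow>xs. c * ebasis j \<theta>)"

lemma trig_poly_Nil [simp]: "trig_poly [] \<theta> = 0"
  by (simp add: trig_poly_def)

lemma trig_poly_Cons [simp]: "trig_poly ((j,c)#xs) \<theta> = c * ebasis j \<theta> + trig_poly xs \<theta>"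
  by (simp add: trig_poly_def)

lemma trig_poly_append: "trig_poly (xs @ ys) \<theta> = trig_poly xs \<theta> + trig_poly ys \<theta>"
  by (simp add: trig_poly_def)

lemma trig_poly_cmult: "trig_poly (map (\<lambda>(j,c). (j, a*c)) xs) \<theta> = a * trig_poly xs \<theta>"
  by (induction xs) (auto simp: algebra_simps)

lemma trig_poly_mult:
  "trig_poly (concat (map (\<lambda>(j,c). map (\<lambda>(l,d). (j+l, c*d)) ys) xs)) \<theta> = trig_poly xs \<theta> * trig_poly ys \<theta>"
proof -
  have monomial: "trig_poly (map (\<lambda>(l,d). (j+l, c*d)) ys) \<theta> = c * ebasis j \<theta> * trig_poly ys \<theta>" for j c
    by (induction ys) (auto simp: ebasis_mult[symmetric] algebra_simps)
  show ?thesis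
    by (induction xs) (auto simp: trig_poly_append monomial distrib_right)
qed

lemma continuous_on_trig_poly [continuous_intros]: "continuous_on A (trig_poly xs)"
  unfolding trig_poly_def by (induction xs) (auto intro!: continuous_intros)

lemma norm_trig_poly_le: "cmod (trig_poly xs \<theta>) \<le> (\<Sum>(j,c)\<leftarrow>xs. cmod c)"
proof (induction xs)
  case (Cons a xs)
  then show ?case
    by (cases a) (auto simp: norm_mult intro!: order_trans[OF norm_triangle_ineq])
qed simp

lemma integrable_mult_trig_poly: "integrable \<mu> g \<Longrightarrow> integrable \<mu> (\<lambda>\<theta>. g \<theta> * trig_poly xs \<theta>)"
  using integrable_mult_bounded[OF _ continuous_on_torus_measurable[OF continuous_on_trig_poly] norm_trig_poly_le] .

lemma integral_mult_trig_poly_eq_0: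
  assumes "integrable \<mu> g" "\<forall>j. fcoeff g j = 0"
  shows "integral\<^sup>L \<mu> (\<lambda>\<theta>. g \<theta> * trig_poly xs \<theta>) = 0"
proof (induction xs)
  case (Cons a xs)
  obtain j c where a: "a = (j,c)" by (cases a)
  have "integral\<^sup>L \<mu> (\<lambda>\<theta>. g \<theta> * ebasis j \<theta>) = 2 * pi * fcoeff g (-j)"
    using integral_mult_cnj_ebasis[of g "-j"] by (simp add: ebasis_cnj)
  then have "integral\<^sup>L \<mu> (\<lambda>\<theta>. c * (g \<theta> * ebasis j \<theta>) + g \<theta> * trig_poly xs \<theta>) = 0"
    using Cons assms integrable_mult_ebasis integrable_mult_trig_poly by simp
  then show ?case using a by (simp add: algebra_simps)
qed simp

lemma real_polynomial_function_on_circle: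
  assumes "real_polynomial_function p"
  shows "\<exists>xs. \<forall>\<theta>. complex_of_real (p (exp (\<i> * of_real \<theta>))) = trig_poly xs \<theta>"
  using assms
proof (induction rule: real_polynomial_function.induct)
  case (linear f)
  have f: "f z = Re z * f 1 + Im z * f \<i>" for z
  proof -
    have "z = Re z *\<^sub>R 1 + Im z *\<^sub>R \<i>" by (simp add: complex_eq_iff)
    then have "f z = f (Re z *\<^sub>R 1 + Im z *\<^sub>R \<i>)" by simp
    also have "\<dots> = Re z * f 1 + Im z * f \<i>"
      using linear linear_simps(1)[OF linear] linear_cmul[OF bounded_linear.linear[OF linear]] by simp
    finally show ?thesis .
  qed
  define A where "A = complex_of_real (f 1)"
  define B where "B = complex_of_real (f \<i>)"
  have "complex_of_real (f (exp (\<i> * of_real \<theta>))) = trig_poly [(1, (A - \<i>*B)/2), (-1, (A + \<i>*B)/2)] \<theta>" for \<theta>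
  proof -
    define c where "c = complex_of_real (cos \<theta>)"
    define s where "s = complex_of_real (sin \<theta>)"
    have "ebasis 1 \<theta> = c + \<i> * s" "ebasis (-1) \<theta> = c - \<i> * s"
      unfolding ebasis_eq_cis c_def s_def by (simp_all add: complex_eq_iff)
    moreover have "complex_of_real (f (exp (\<i> * of_real \<theta>))) = A * c + B * s"
      by (subst f) (simp add: A_def B_def c_def s_def cis_conv_exp[symmetric])
    moreover have "(A - \<i> * B) / 2 * (c + \<i> * s) + (A + \<i> * B) / 2 * (c - \<i> * s) = A * c + B * s"
      by (simp add: field_simps)
    ultimately show ?thesis by simp
  qed
  then show ?case by blast
next
  case (const c)
  have "complex_of_real c = trig_poly [(0, complex_of_real c)] \<theta>" for \<theta>
    by (simp add: ebasis_def)
  then show ?case by blast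
next
  case (add f g)
  then obtain xs ys where "\<forall>\<theta>. complex_of_real (f (exp (\<i> * of_real \<theta>))) = trig_poly xs \<theta>"
    "\<forall>\<theta>. complex_of_real (g (exp (\<i> * of_real \<theta>))) = trig_poly ys \<theta>" by blast
  then have "\<forall>\<theta>. complex_of_real (f (exp (\<i> * of_real \<theta>)) + g (exp (\<i> * of_real \<theta>))) = trig_poly (xs @ ys) \<theta>"
    by (simp add: trig_poly_append)
  then show ?case by blast
next
  case (mult f g)
  then obtain xs ys where "\<forall>\<theta>. complex_of_real (f (exp (\<i> * of_real \<theta>))) = trig_poly xs \<theta>"
    "\<forall>\<theta>. complex_of_real (g (exp (\<i> * of_real \<theta>))) = trig_poly ys \<theta>" by blast
  then have "\<forall>\<theta>. complex_of_real (f (exp (\<i> * of_real \<theta>)) * g (exp (\<i> * of_real \<theta>))) =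
       trig_poly (concat (map (\<lambda>(j,c). map (\<lambda>(l,d). (j+l, c*d)) ys) xs)) \<theta>"
    by (simp add: trig_poly_mult)
  then show ?case by blast
qed

lemma polynomial_function_on_circle:
  fixes h :: "complex \<Rightarrow> complex"
  assumes "polynomial_function h"
  shows "\<exists>xs. \<forall>\<theta>. h (exp (\<i> * of_real \<theta>)) = trig_poly xs \<theta>"
proof -
  have "real_polynomial_function (Re \<circ> h)" "real_polynomial_function (Im \<circ> h)"
    using assms bounded_linear_Re bounded_linear_Im unfolding polynomial_function_def by blast+
  then obtain xs ys where
    "\<And>\<theta>. complex_of_real (Re (h (exp (\<i> * of_real \<theta>)))) = trig_poly xs \<theta>"
    "\<And>\<theta>. complex_of_real (Im (h (exp (\<i> * of_real \<theta>)))) = trig_poly ys \<theta>"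
    using real_polynomial_function_on_circle unfolding o_def by metis
  then have "h (exp (\<i> * of_real \<theta>)) = trig_poly (xs @ map (\<lambda>(j,c). (j, \<i>*c)) ys) \<theta>" for \<theta>
    using complex_eq[of "h (exp (\<i> * of_real \<theta>))"] by (simp only: trig_poly_append trig_poly_cmult)
  then show ?thesis by blast
qed

lemma exp_i_eq_on_torus:
  assumes "\<theta> \<in> torus" "\<theta>' \<in> torus" "exp (\<i> * of_real \<theta>) = exp (\<i> * of_real \<theta>')"
  shows "\<theta> = \<theta>' \<or> {\<theta>, \<theta>'} = {0, 2*pi}"
proof -
  obtain n :: int where "\<i> * of_real \<theta> = \<i> * of_real \<theta>' + complex_of_real (real_of_int (2 * n) * pi) * \<i>"
    using assms(3) exp_eq by blast
  then have "Im (\<i> * of_real \<theta>) = Im (\<i> * of_real \<theta>' + complex_of_real (real_of_int (2 * n) * pi) * \<i>)"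
    by simp
  then have d: "\<theta> - \<theta>' = real_of_int n * (2*pi)" by simp
  have "0 \<le> \<theta>" "\<theta> \<le> 2*pi" "0 \<le> \<theta>'" "\<theta>' \<le> 2*pi" using assms(1,2) by auto
  then have "real_of_int n * (2*pi) \<le> 1 * (2*pi)" "(-1) * (2*pi) \<le> real_of_int n * (2*pi)"
    using d by linarith+
  then have "real_of_int n \<le> 1" "-1 \<le> real_of_int n"
    by (auto intro: mult_right_le_imp_le[of _ "2*pi"])
  then have "n \<in> {-1, 0, 1}" by auto
  then show ?thesis using d assms(1,2) by auto
qed

text \<open>The map \<open>\<theta> \<mapsto> e\<^sup>i\<^sup>\<theta>\<close> is a quotient map from \<open>[0,2\<pi>]\<close> onto the unit circle.\<close>
lemma continuous_periodic_factors_through_circle: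
  fixes \<psi> :: "real \<Rightarrow> complex"
  assumes "continuous_on torus \<psi>" "\<psi> 0 = \<psi> (2*pi)"
  obtains \<Phi> where "continuous_on (sphere 0 1) \<Phi>" "\<And>\<theta>. \<theta> \<in> torus \<Longrightarrow> \<Phi> (exp (\<i> * of_real \<theta>)) = \<psi> \<theta>"
proof -
  define f where "f = (\<lambda>\<theta>::real. exp (\<i> * complex_of_real \<theta>))"
  define \<Phi> where "\<Phi> z = \<psi> (SOME \<theta>. \<theta> \<in> torus \<and> f \<theta> = z)" for z
  have \<Phi>: "\<Phi> (f \<theta>) = \<psi> \<theta>" if "\<theta> \<in> torus" for \<theta>
  proof -
    define \<theta>' where "\<theta>' = (SOME \<theta>'. \<theta>' \<in> torus \<and> f \<theta>' = f \<theta>)"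
    have "\<theta>' \<in> torus \<and> f \<theta>' = f \<theta>"
      unfolding \<theta>'_def by (rule someI_ex) (use that in blast)
    then have "\<theta>' = \<theta> \<or> {\<theta>', \<theta>} = {0, 2*pi}"
      using exp_i_eq_on_torus[of \<theta>' \<theta>] that unfolding f_def by blast
    then have "\<psi> \<theta>' = \<psi> \<theta>" using assms(2) by (auto simp: doubleton_eq_iff)
    then show ?thesis unfolding \<Phi>_def \<theta>'_def by simp
  qed
  have image: "f ` torus = sphere 0 1"
  proof
    show "f ` torus \<subseteq> sphere 0 1" by (auto simp: f_def norm_exp_eq_Re)
    show "sphere 0 1 \<subseteq> f ` torus"
    proof
      fix z :: complex assume "z \<in> sphere 0 1"
      then have "z = f (Arg2pi z)" using Arg2pi_eq[of z] by (simp add: f_def)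
      moreover have "Arg2pi z \<in> torus" using Arg2pi_ge_0[of z] Arg2pi_lt_2pi[of z] by simp
      ultimately show "z \<in> f ` torus" by blast
    qed
  qed
  have quotient: "quotient_map (top_of_set torus) (top_of_set (sphere 0 1)) f"
  proof (rule continuous_imp_quotient_map)
    have "continuous_on torus f" unfolding f_def by (intro continuous_intros)
    then show "continuous_map (top_of_set torus) (top_of_set (sphere 0 1)) f"
      using image by (auto simp: continuous_map_subtopology_eu)
    show "compact_space (top_of_set torus)"
      by (rule compact_space_subtopology) (simp add: compactin_euclidean_iff)
    show "Hausdorff_space (top_of_set (sphere (0::complex) 1))"
      by (rule Hausdorff_space_subtopology) (rule Hausdorff_space_euclidean)
    show "f ` topspace (top_of_set torus) = topspace (top_of_set (sphere 0 1))"
      using image by simp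
  qed
  have "continuous_on torus (\<Phi> \<circ> f)"
    using assms(1) by (rule continuous_on_eq) (simp add: \<Phi>)
  then have "continuous_map (top_of_set torus) euclidean (\<Phi> \<circ> f)" by simp
  then have "continuous_map (top_of_set (sphere 0 1)) euclidean \<Phi>"
    by (rule continuous_compose_quotient_map[OF quotient])
  then have "continuous_on (sphere 0 1) \<Phi>" by simp
  with \<Phi> that show ?thesis unfolding f_def by blast
qed

lemma trig_poly_uniform_approximation:
  fixes \<psi> :: "real \<Rightarrow> complex"
  assumes "continuous_on torus \<psi>" "\<psi> 0 = \<psi> (2*pi)" "\<epsilon> > 0"
  obtains xs where "\<And>\<theta>. \<theta> \<in> torus \<Longrightarrow> cmod (\<psi> \<theta> - trig_poly xs \<theta>) \<le> \<epsilon>"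
proof -
  obtain \<Phi> where \<Phi>: "continuous_on (sphere 0 1) \<Phi>" "\<And>\<theta>. \<theta> \<in> torus \<Longrightarrow> \<Phi> (exp (\<i> * of_real \<theta>)) = \<psi> \<theta>"
    using continuous_periodic_factors_through_circle[OF assms(1,2)] by blast
  obtain h where h: "polynomial_function h" "\<forall>z\<in>sphere 0 1. norm (\<Phi> z - h z) < \<epsilon>"
    using Stone_Weierstrass_polynomial_function[OF compact_sphere \<Phi>(1) assms(3)] by blast
  obtain xs where "\<forall>\<theta>. h (exp (\<i> * of_real \<theta>)) = trig_poly xs \<theta>"
    using polynomial_function_on_circle[OF h(1)] by blast
  moreover have "exp (\<i> * of_real \<theta>) \<in> sphere 0 1" for \<theta>
    by (simp add: norm_exp_eq_Re)
  ultimately show ?thesis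
    using that h(2) \<Phi>(2) by (metis less_imp_le)
qed

lemma integral_mult_continuous_periodic_eq_0:
  assumes g: "integrable \<mu> g" "\<forall>j. fcoeff g j = 0"
    and \<psi>: "continuous_on torus \<psi>" "\<psi> 0 = \<psi> (2*pi)"
  shows "integral\<^sup>L \<mu> (\<lambda>\<theta>. g \<theta> * \<psi> \<theta>) = 0"
proof -
  have "bounded (\<psi> ` torus)"
    using compact_imp_bounded[OF compact_continuous_image[OF \<psi>(1)]] by simp
  then obtain B where "\<forall>y\<in>\<psi> ` torus. cmod y \<le> B" by (auto simp: bounded_iff)
  then have B: "\<And>x. x \<in> torus \<Longrightarrow> cmod (\<psi> x) \<le> B" by blast
  have g\<psi>: "integrable \<mu> (\<lambda>\<theta>. g \<theta> * \<psi> \<theta>)"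
    by (rule integrable_mult_bounded[OF g(1) continuous_on_torus_measurable[OF \<psi>(1)] B])
  let ?I = "integral\<^sup>L \<mu> (\<lambda>x. cmod (g x))"
  have approx: "cmod (integral\<^sup>L \<mu> (\<lambda>\<theta>. g \<theta> * \<psi> \<theta>)) \<le> \<epsilon> * ?I" if \<epsilon>: "\<epsilon> > 0" for \<epsilon>
  proof -
    obtain xs where xs: "\<And>\<theta>. \<theta> \<in> torus \<Longrightarrow> cmod (\<psi> \<theta> - trig_poly xs \<theta>) \<le> \<epsilon>"
      using trig_poly_uniform_approximation[OF \<psi> \<epsilon>] by blast
    have gT: "integrable \<mu> (\<lambda>\<theta>. g \<theta> * trig_poly xs \<theta>)" by (rule integrable_mult_trig_poly[OF g(1)])
    have "integral\<^sup>L \<mu> (\<lambda>\<theta>. g \<theta> * \<psi> \<theta>) = integral\<^sup>L \<mu> (\<lambda>\<theta>. g \<theta> * \<psi> \<theta> - g \<theta> * trig_poly xs \<theta>)"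
      using integral_mult_trig_poly_eq_0[OF g] g\<psi> gT by simp
    also have "cmod \<dots> \<le> integral\<^sup>L \<mu> (\<lambda>\<theta>. cmod (g \<theta> * \<psi> \<theta> - g \<theta> * trig_poly xs \<theta>))"
      by (rule integral_norm_bound)
    also have "\<dots> \<le> integral\<^sup>L \<mu> (\<lambda>\<theta>. \<epsilon> * cmod (g \<theta>))"
    proof (rule integral_mono)
      show "integrable \<mu> (\<lambda>\<theta>. cmod (g \<theta> * \<psi> \<theta> - g \<theta> * trig_poly xs \<theta>))" using g\<psi> gT by simp
      show "integrable \<mu> (\<lambda>\<theta>. \<epsilon> * cmod (g \<theta>))" using g(1) by simp
      show "cmod (g \<theta> * \<psi> \<theta> - g \<theta> * trig_poly xs \<theta>) \<le> \<epsilon> * cmod (g \<theta>)" if "\<theta> \<in> space \<mu>" for \<theta>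
      proof -
        have "cmod (g \<theta> * \<psi> \<theta> - g \<theta> * trig_poly xs \<theta>) = cmod (g \<theta>) * cmod (\<psi> \<theta> - trig_poly xs \<theta>)"
          by (simp add: right_diff_distrib[symmetric] norm_mult)
        also have "\<dots> \<le> cmod (g \<theta>) * \<epsilon>" by (rule mult_left_mono) (use xs that in auto)
        finally show ?thesis by (simp add: mult.commute)
      qed
    qed
    finally show ?thesis by simp
  qed
  have I: "0 \<le> ?I" by (rule integral_nonneg_AE) simp
  have "cmod (integral\<^sup>L \<mu> (\<lambda>\<theta>. g \<theta> * \<psi> \<theta>)) \<le> 0 + e" if "e > 0" for e
  proof -
    have "cmod (integral\<^sup>L \<mu> (\<lambda>\<theta>. g \<theta> * \<psi> \<theta>)) \<le> e / (?I + 1) * ?I"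
      using approx[of "e / (?I + 1)"] that I by simp
    also have "\<dots> = e * (?I / (?I + 1))" by simp
    also have "\<dots> \<le> e * 1"
    proof (rule mult_left_mono)
      have "0 < ?I + 1" using I by linarith
      then show "?I / (?I + 1) \<le> 1" by (simp add: divide_le_eq_1)
    qed (use that in simp)
    finally show ?thesis by simp
  qed
  then have "cmod (integral\<^sup>L \<mu> (\<lambda>\<theta>. g \<theta> * \<psi> \<theta>)) \<le> 0" by (rule field_le_epsilon)
  then show ?thesis by simp
qed

lemma closed_open_sandwich_interval:
  assumes "A \<in> sets lebesgue" "A \<subseteq> {0<..<2*pi}" "\<epsilon> > 0"
  obtains K V where "closed K" "open V" "K \<subseteq> A" "A \<subseteq> V" "V \<subseteq> {0<..<2*pi}"
    "emeasure lebesgue (V - K) \<le> ennreal (2 * \<epsilon>)"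
proof -
  obtain K where K: "closed K" "K \<subseteq> A" "A - K \<in> lmeasurable" "emeasure lebesgue (A - K) < ennreal \<epsilon>"
    using sets_lebesgue_inner_closed[OF assms(1,3)] by blast
  obtain U where U: "open U" "A \<subseteq> U" "U - A \<in> lmeasurable" "emeasure lebesgue (U - A) < ennreal \<epsilon>"
    using sets_lebesgue_outer_open[OF assms(1,3)] by blast
  define V where "V = U \<inter> {0<..<2*pi}"
  have sets: "U - A \<in> sets lebesgue" "A - K \<in> sets lebesgue"
    using U(3) K(3) by (auto dest: fmeasurableD)
  have "emeasure lebesgue (V - K) \<le> emeasure lebesgue ((U - A) \<union> (A - K))"
    by (rule emeasure_mono) (use sets in \<open>auto simp: V_def\<close>)
  also have "\<dots> \<le> emeasure lebesgue (U - A) + emeasure lebesgue (A - K)"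
    by (rule emeasure_subadditive[OF sets])
  also have "\<dots> \<le> ennreal \<epsilon> + ennreal \<epsilon>"
    using U(4) K(4) by (intro add_mono) auto
  also have "\<dots> = ennreal (2 * \<epsilon>)"
    using assms(3) by (simp add: ennreal_plus[symmetric])
  finally have "emeasure lebesgue (V - K) \<le> ennreal (2 * \<epsilon>)" .
  moreover have "open V" "A \<subseteq> V" "V \<subseteq> {0<..<2*pi}"
    using U(1,2) assms(2) by (auto simp: V_def)
  ultimately show ?thesis using that K(1,2) by blast
qed

lemma AE_eventually_notin_geometric:
  assumes "\<And>n. E n \<in> sets \<mu>" "\<And>n. emeasure \<mu> (E n) \<le> ennreal (2 * (1/2)^n)"
  shows "AE x in \<mu>. eventually (\<lambda>n. x \<notin> E n) sequentially"
proof -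
  have "summable (\<lambda>n. measure \<mu> (E n))"
  proof (rule summable_comparison_test)
    have "measure \<mu> (E n) \<le> 2 * (1/2)^n" for n
      unfolding measure_def by (rule enn2real_leI) (simp_all add: assms(2))
    then show "\<exists>N. \<forall>n\<ge>N. norm (measure \<mu> (E n)) \<le> 2 * (1/2)^n" by simp
    show "summable (\<lambda>n. 2 * (1/2::real)^n)" by (intro summable_mult summable_geometric) simp
  qed
  moreover have "emeasure \<mu> (E n) < \<infinity>" for n
    using assms(2)[of n] by (simp add: le_less_trans)
  ultimately have "AE x in \<mu>. eventually (\<lambda>n. x \<in> space \<mu> - E n) sequentially"
    using assms(1) by (intro borel_cantelli_AE1)
  then show ?thesis by eventually_elim (auto elim: eventually_mono)
qed

text \<open>Urysohn functions between the inner closed and outer open approximations of \<open>A\<close>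
  converge to the indicator of \<open>A\<close> outside the (null, by Borel--Cantelli) set of points lying
  in infinitely many of the gaps.\<close>
lemma indicator_AE_limit_of_continuous:
  assumes "A \<in> sets lebesgue" "A \<subseteq> {0<..<2*pi}"
  obtains F :: "nat \<Rightarrow> real \<Rightarrow> real" where
    "\<And>n. continuous_on UNIV (F n)" "\<And>n x. 0 \<le> F n x \<and> F n x \<le> 1"
    "\<And>n. F n 0 = 0" "\<And>n. F n (2*pi) = 0"
    "AE x in \<mu>. (\<lambda>n. F n x) \<longlonglongrightarrow> indicator A x"
proof -
  have "\<exists>K V. closed K \<and> open V \<and> K \<subseteq> A \<and> A \<subseteq> V \<and> V \<subseteq> {0<..<2*pi} \<and>
          emeasure lebesgue (V - K) \<le> ennreal (2 * (1/2)^n)" for n :: nat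
  proof -
    obtain K V where "closed K" "open V" "K \<subseteq> A" "A \<subseteq> V" "V \<subseteq> {0<..<2*pi}"
      "emeasure lebesgue (V - K) \<le> ennreal (2 * (1/2)^n)"
      using closed_open_sandwich_interval[OF assms, of "(1/2)^n"] by auto
    then show ?thesis by blast
  qed
  then obtain K V where KV: "\<And>n. closed (K n)" "\<And>n. open (V n)" "\<And>n. K n \<subseteq> A" "\<And>n. A \<subseteq> V n"
    "\<And>n. V n \<subseteq> {0<..<2*pi}" "\<And>n. emeasure lebesgue (V n - K n) \<le> ennreal (2 * (1/2)^n)"
    by metis
  have "\<exists>f::real\<Rightarrow>real. continuous_on UNIV f \<and> (\<forall>x. f x \<in> closed_segment 1 0) \<and>
          (\<forall>x\<in>K n. f x = 1) \<and> (\<forall>x\<in>- V n. f x = 0)" for n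
  proof -
    have closed: "closed (- V n)" using KV(2) by (simp add: closed_Compl)
    have disjoint: "K n \<inter> - V n = {}" using KV(3,4) by blast
    obtain f :: "real \<Rightarrow> real" where "continuous_on UNIV f" "\<And>x. f x \<in> closed_segment 1 0"
      "\<And>x. x \<in> K n \<Longrightarrow> f x = 1" "\<And>x. x \<in> - V n \<Longrightarrow> f x = 0"
      using Urysohn[OF KV(1) closed disjoint, where a=1 and b=0] by blast
    then show ?thesis by blast
  qed
  then obtain F :: "nat \<Rightarrow> real \<Rightarrow> real" where F': "\<And>n. continuous_on UNIV (F n) \<and>
      (\<forall>x. F n x \<in> closed_segment 1 0) \<and> (\<forall>x\<in>K n. F n x = 1) \<and> (\<forall>x\<in>- V n. F n x = 0)"
    by metis
  then have F: "\<And>n. continuous_on UNIV (F n)" "\<And>n x. F n x \<in> closed_segment 1 0"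
    "\<And>n x. x \<in> K n \<Longrightarrow> F n x = 1" "\<And>n x. x \<notin> V n \<Longrightarrow> F n x = 0"
    by auto
  define E where "E n = V n - K n" for n
  have E: "E n \<in> sets \<mu>" for n
    using KV(1,2,5)[of n] by (auto simp: E_def sets_torus_measure_iff)
  have emeasure_E: "emeasure \<mu> (E n) \<le> ennreal (2 * (1/2)^n)" for n
  proof -
    have "emeasure \<mu> (E n) = emeasure lebesgue (E n)"
      using KV(5)[of n] by (intro emeasure_restrict_space) (auto simp: E_def)
    then show ?thesis using KV(6)[of n] by (simp add: E_def)
  qed
  have "AE x in \<mu>. eventually (\<lambda>n. x \<notin> E n) sequentially"
    by (rule AE_eventually_notin_geometric[OF E emeasure_E])
  then have "AE x in \<mu>. (\<lambda>n. F n x) \<longlonglongrightarrow> indicator A x"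
  proof eventually_elim
    case (elim x)
    have "F n x = indicator A x" if "x \<notin> E n" for n
    proof (cases "x \<in> A")
      case True
      then have "x \<in> K n" using that KV(4)[of n] by (auto simp: E_def)
      then show ?thesis using True F(3) by simp
    next
      case False
      then have "x \<notin> V n" using that KV(3)[of n] by (auto simp: E_def)
      then show ?thesis using False F(4) by simp
    qed
    then have "eventually (\<lambda>n. F n x = indicator A x) sequentially"
      using elim by (rule eventually_mono[rotated])
    then show ?case by (rule tendsto_eventually)
  qed
  moreover have "F n 0 = 0 \<and> F n (2*pi) = 0" for n
  proof -
    have "0 \<notin> V n" "2*pi \<notin> V n" using KV(5)[of n] by auto
    then show ?thesis using F(4) by simp
  qed
  moreover have "0 \<le> F n x \<and> F n x \<le> 1" for n x
    using F(2)[of n x] by (auto simp: closed_segment_eq_real_ivl)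
  ultimately show ?thesis using that F(1) by blast
qed

lemma integral_indicator_eq_0:
  assumes g: "integrable \<mu> g" "\<forall>j. fcoeff g j = 0" and A: "A \<in> sets \<mu>"
  shows "integral\<^sup>L \<mu> (\<lambda>x. indicator A x *\<^sub>R g x) = 0"
proof -
  define A' where "A' = A \<inter> {0<..<2*pi}"
  have A': "A' \<in> sets lebesgue" "A' \<subseteq> {0<..<2*pi}" "A' \<in> sets \<mu>"
    using A unfolding A'_def sets_torus_measure_iff by auto
  obtain F :: "nat \<Rightarrow> real \<Rightarrow> real" where F: "\<And>n. continuous_on UNIV (F n)" "\<And>n x. 0 \<le> F n x \<and> F n x \<le> 1"
    "\<And>n. F n 0 = 0" "\<And>n. F n (2*pi) = 0" "AE x in \<mu>. (\<lambda>n. F n x) \<longlonglongrightarrow> indicator A' x"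
    using indicator_AE_limit_of_continuous[OF A'(1,2)] by blast
  have gm: "g \<in> borel_measurable \<mu>" using g(1) by (rule borel_measurable_integrable)
  define \<psi> where "\<psi> n x = complex_of_real (F n x)" for n x
  have \<psi>: "continuous_on torus (\<psi> n)" for n
    unfolding \<psi>_def using F(1)[of n] by (auto intro!: continuous_intros intro: continuous_on_subset)
  have "(\<lambda>n. integral\<^sup>L \<mu> (\<lambda>x. g x * \<psi> n x)) \<longlonglongrightarrow> integral\<^sup>L \<mu> (\<lambda>x. g x * complex_of_real (indicator A' x))"
  proof (rule integral_dominated_convergence[where w="\<lambda>x. cmod (g x)"])
    show "(\<lambda>x. g x * complex_of_real (indicator A' x)) \<in> borel_measurable \<mu>"
      using gm A'(3) by measurable
    show "(\<lambda>x. g x * \<psi> n x) \<in> borel_measurable \<mu>" for n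
      using gm continuous_on_torus_measurable[OF \<psi>] by (rule borel_measurable_times)
    show "integrable \<mu> (\<lambda>x. cmod (g x))" using g(1) by simp
    show "AE x in \<mu>. (\<lambda>n. g x * \<psi> n x) \<longlonglongrightarrow> g x * complex_of_real (indicator A' x)"
      using F(5) unfolding \<psi>_def by eventually_elim (intro tendsto_mult tendsto_const tendsto_of_real)
    show "AE x in \<mu>. norm (g x * \<psi> n x) \<le> cmod (g x)" for n
    proof (rule AE_I2)
      fix x
      have "cmod (g x) * cmod (\<psi> n x) \<le> cmod (g x) * 1"
        using F(2)[of n x] unfolding \<psi>_def by (intro mult_left_mono) auto
      then show "norm (g x * \<psi> n x) \<le> cmod (g x)" by (simp add: norm_mult)
    qed
  qed
  moreover have "integral\<^sup>L \<mu> (\<lambda>x. g x * \<psi> n x) = 0" for n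
    by (rule integral_mult_continuous_periodic_eq_0[OF g \<psi>]) (simp add: \<psi>_def F(3,4))
  ultimately have "(\<lambda>n. 0) \<longlonglongrightarrow> integral\<^sup>L \<mu> (\<lambda>x. g x * complex_of_real (indicator A' x))"
    by simp
  then have "0 = integral\<^sup>L \<mu> (\<lambda>x. g x * complex_of_real (indicator A' x))"
    by (rule LIMSEQ_unique[OF tendsto_const])
  moreover have "integral\<^sup>L \<mu> (\<lambda>x. indicator A x *\<^sub>R g x) = integral\<^sup>L \<mu> (\<lambda>x. g x * complex_of_real (indicator A' x))"
  proof (rule integral_cong_AE)
    show "(\<lambda>x. indicator A x *\<^sub>R g x) \<in> borel_measurable \<mu>" using gm A by measurable
    show "(\<lambda>x. g x * complex_of_real (indicator A' x)) \<in> borel_measurable \<mu>" using gm A'(3) by measurable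
    show "AE x in \<mu>. indicator A x *\<^sub>R g x = g x * complex_of_real (indicator A' x)"
      using AE_torus_interior by eventually_elim (simp add: A'_def indicator_def scaleR_conv_of_real)
  qed
  ultimately show ?thesis by simp
qed

theorem fourier_unique:
  assumes "integrable \<mu> g" "\<forall>j. fcoeff g j = 0"
  shows "AE x in \<mu>. g x = 0"
proof -
  have "AE x in \<mu>. g x = (\<lambda>_. 0) x"
  proof (rule sigma_finite_measure.density_unique_banach[OF finite_measure.axioms(1)[OF finite_measure_torus] assms(1)])
    show "set_lebesgue_integral \<mu> A g = set_lebesgue_integral \<mu> A (\<lambda>_. 0)" if "A \<in> sets \<mu>" for A
      unfolding set_lebesgue_integral_def using integral_indicator_eq_0[OF assms that] by simp
  qed simp
  then show ?thesis by simp
qed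

lemma AE_eq_if_fcoeff_eq:
  assumes "integrable \<mu> u" "integrable \<mu> v" "\<forall>j. fcoeff u j = fcoeff v j"
  shows "AE x in \<mu>. u x = v x"
  using fourier_unique[of "\<lambda>x. u x - v x"] assms fcoeff_diff[OF assms(1,2)] by simp


section \<open>Completeness and Parseval's identity\<close>

lemma symmetric_partial_sums_tendsto_infsum:
  fixes b :: "int \<Rightarrow> real"
  assumes summable: "b summable_on UNIV" and nonneg: "\<And>j. 0 \<le> b j"
  shows "(\<lambda>m. \<Sum>j\<in>{-int m..int m}. b j) \<longlonglongrightarrow> infsum b UNIV"
proof (rule LIMSEQ_I)
  fix e :: real assume "0 < e"
  have "(sum b \<longlongrightarrow> infsum b UNIV) (finite_subsets_at_top UNIV)"
    using summable has_sum_def has_sum_infsum by blast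
  then have "eventually (\<lambda>F. dist (sum b F) (infsum b UNIV) < e) (finite_subsets_at_top UNIV)"
    using \<open>0 < e\<close> by (rule tendstoD)
  then obtain X where X: "finite X" "dist (sum b X) (infsum b UNIV) < e"
    unfolding eventually_finite_subsets_at_top by blast
  define m0 where "m0 = nat (Max (insert 0 (abs ` X)))"
  have X_sub: "X \<subseteq> {-int m..int m}" if "m0 \<le> m" for m
  proof
    fix j assume "j \<in> X"
    then have "\<bar>j\<bar> \<le> Max (insert 0 (abs ` X))" using X(1) by (intro Max_ge) auto
    moreover have "0 \<le> Max (insert 0 (abs ` X))" using X(1) by (intro Max_ge) auto
    ultimately have "\<bar>j\<bar> \<le> int m0" unfolding m0_def by simp
    then show "j \<in> {-int m..int m}" using that by (simp add: abs_le_iff)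
  qed
  show "\<exists>m0. \<forall>m\<ge>m0. norm ((\<Sum>j\<in>{-int m..int m}. b j) - infsum b UNIV) < e"
  proof (intro exI allI impI)
    fix m assume "m0 \<le> m"
    then have "sum b X \<le> (\<Sum>j\<in>{-int m..int m}. b j)"
      using X_sub nonneg by (intro sum_mono2) auto
    moreover have "(\<Sum>j\<in>{-int m..int m}. b j) \<le> infsum b UNIV"
      using nonneg by (intro finite_sum_le_infsum[OF summable]) auto
    ultimately show "norm ((\<Sum>j\<in>{-int m..int m}. b j) - infsum b UNIV) < e"
      using X(2) by (simp add: dist_real_def)
  qed
qed

lemma integral_norm_sq_le_if_AE_limit:
  assumes h: "\<And>i. h i \<in> borel_measurable \<mu>" and g: "g \<in> borel_measurable \<mu>"
    and lim: "AE x in \<mu>. (\<lambda>i. h i x) \<longlonglongrightarrow> g x"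
    and bound: "\<And>i. integrable \<mu> (\<lambda>x. (cmod (h i x))\<^sup>2)"
      "\<And>i. i \<ge> N \<Longrightarrow> integral\<^sup>L \<mu> (\<lambda>x. (cmod (h i x))\<^sup>2) \<le> C"
  shows "integrable \<mu> (\<lambda>x. (cmod (g x))\<^sup>2)" "integral\<^sup>L \<mu> (\<lambda>x. (cmod (g x))\<^sup>2) \<le> C"
proof -
  define u where "u i x = ennreal ((cmod (h i x))\<^sup>2)" for i x
  have u: "u i \<in> borel_measurable \<mu>" for i
    unfolding u_def using h by measurable
  have "AE x in \<mu>. ennreal ((cmod (g x))\<^sup>2) = liminf (\<lambda>i. u i x)"
    using lim
  proof eventually_elim
    case (elim x)
    have "(\<lambda>i. (cmod (h i x))\<^sup>2) \<longlonglongrightarrow> (cmod (g x))\<^sup>2"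
      by (intro tendsto_intros elim)
    then have "(\<lambda>i. u i x) \<longlonglongrightarrow> ennreal ((cmod (g x))\<^sup>2)"
      unfolding u_def by (rule tendsto_ennrealI)
    then show ?case by (simp add: lim_imp_Liminf)
  qed
  then have "(\<integral>\<^sup>+ x. ennreal ((cmod (g x))\<^sup>2) \<partial>\<mu>) = (\<integral>\<^sup>+ x. liminf (\<lambda>i. u i x) \<partial>\<mu>)"
    by (rule nn_integral_cong_AE)
  also have "\<dots> \<le> liminf (\<lambda>i. integral\<^sup>N \<mu> (u i))"
    by (rule nn_integral_liminf[OF u])
  also have "\<dots> \<le> ennreal C"
  proof (rule Liminf_le)
    have "integral\<^sup>N \<mu> (u i) \<le> ennreal C" if "i \<ge> N" for i
    proof -
      have "integral\<^sup>N \<mu> (u i) = ennreal (integral\<^sup>L \<mu> (\<lambda>x. (cmod (h i x))\<^sup>2))"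
        unfolding u_def by (rule nn_integral_eq_integral[OF bound(1)]) simp
      then show ?thesis using bound(2)[OF that] by (simp add: ennreal_leI)
    qed
    then show "eventually (\<lambda>i. integral\<^sup>N \<mu> (u i) \<le> ennreal C) sequentially"
      by (auto simp: eventually_sequentially)
  qed simp
  finally have nn: "(\<integral>\<^sup>+ x. ennreal ((cmod (g x))\<^sup>2) \<partial>\<mu>) \<le> ennreal C" .
  show integrable: "integrable \<mu> (\<lambda>x. (cmod (g x))\<^sup>2)"
  proof (rule integrableI_bounded)
    show "(\<lambda>x. (cmod (g x))\<^sup>2) \<in> borel_measurable \<mu>" using g by measurable
    show "(\<integral>\<^sup>+ x. ennreal (norm ((cmod (g x))\<^sup>2)) \<partial>\<mu>) < \<infinity>"
      using nn by (simp add: le_less_trans)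
  qed
  have "0 \<le> integral\<^sup>L \<mu> (\<lambda>x. (cmod (h N x))\<^sup>2)" by (rule integral_nonneg_AE) simp
  then have "0 \<le> C" using bound(2)[of N] by linarith
  then show "integral\<^sup>L \<mu> (\<lambda>x. (cmod (g x))\<^sup>2) \<le> C"
    using nn nn_integral_eq_integral[OF integrable] by (simp add: ennreal_le_iff)
qed

lemma L2T_Cauchy_imp_L1_Cauchy:
  fixes S :: "nat \<Rightarrow> real \<Rightarrow> complex"
  assumes S: "\<And>m. S m \<in> L2T"
    and symmetric: "\<And>i j. integral\<^sup>L \<mu> (\<lambda>x. (cmod (S i x - S j x))\<^sup>2) \<le> \<epsilon> (min i j)"
    and \<epsilon>: "\<epsilon> \<longlonglongrightarrow> 0" and e: "e > 0"
  shows "\<exists>N. \<forall>i\<ge>N. \<forall>j\<ge>N. LINT x|\<mu>. norm (S i x - S j x) < e"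
proof -
  define \<delta> where "\<delta> = e / (4*pi)"
  have \<delta>: "\<delta> > 0" using e by (simp add: \<delta>_def)
  obtain N where "\<forall>m\<ge>N. norm (\<epsilon> m - 0) < \<delta> * \<delta>"
    using LIMSEQ_D[OF \<epsilon>, of "\<delta> * \<delta>"] \<delta> by auto
  then have N: "\<epsilon> m < \<delta> * \<delta>" if "m \<ge> N" for m
    using that by auto
  have "LINT x|\<mu>. norm (S i x - S j x) < e" if "N \<le> i" "N \<le> j" for i j
  proof -
    have "LINT x|\<mu>. norm (S i x - S j x) \<le> 2*pi*\<delta> + integral\<^sup>L \<mu> (\<lambda>x. (cmod (S i x - S j x))\<^sup>2) / \<delta>"
      by (rule integral_norm_le_L2[OF L2T_diff[OF S S] \<delta>])
    also have "\<dots> < 2*pi*\<delta> + \<delta> * \<delta> / \<delta>"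
    proof -
      have "integral\<^sup>L \<mu> (\<lambda>x. (cmod (S i x - S j x))\<^sup>2) < \<delta> * \<delta>"
        using symmetric[of i j] N[of "min i j"] that by simp
      from divide_strict_right_mono[OF this \<delta>] show ?thesis by simp
    qed
    also have "\<dots> \<le> e" using \<delta> e pi_ge_two by (simp add: \<delta>_def field_simps)
    finally show ?thesis .
  qed
  then show ?thesis by blast
qed

text \<open>Completeness of \<open>L\<^sup>2\<close>: by the bound \<open>integral_norm_le_L2\<close> an \<open>L\<^sup>2\<close>-Cauchy sequence is
  \<open>L\<^sup>1\<close>-Cauchy, so a subsequence converges a.e.; Fatou's lemma controls the limit.\<close>
lemma L2T_Cauchy_limit:
  fixes S :: "nat \<Rightarrow> real \<Rightarrow> complex"
  assumes S: "\<And>m. S m \<in> L2T"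
    and Cauchy: "\<And>m n. m \<le> n \<Longrightarrow> integral\<^sup>L \<mu> (\<lambda>x. (cmod (S n x - S m x))\<^sup>2) \<le> \<epsilon> m"
    and \<epsilon>: "\<epsilon> \<longlonglongrightarrow> 0"
  obtains f where "f \<in> L2T" "\<And>m. integral\<^sup>L \<mu> (\<lambda>x. (cmod (f x - S m x))\<^sup>2) \<le> \<epsilon> m"
proof -
  have L2_diff: "(\<lambda>x. S n x - S m x) \<in> L2T" for m n
    using S S by (rule L2T_diff)
  have symmetric: "integral\<^sup>L \<mu> (\<lambda>x. (cmod (S i x - S j x))\<^sup>2) \<le> \<epsilon> (min i j)" for i j
  proof (cases "j \<le> i")
    case True
    then show ?thesis using Cauchy[of j i] by (simp add: min_absorb2)
  next
    case False
    then show ?thesis using Cauchy[of i j] by (simp add: min_absorb1 norm_minus_commute)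
  qed
  have "\<exists>N. \<forall>i\<ge>N. \<forall>j\<ge>N. LINT x|\<mu>. norm (S i x - S j x) < e" if "e > 0" for e
    by (rule L2T_Cauchy_imp_L1_Cauchy[OF S symmetric \<epsilon> that])
  then obtain r where r: "strict_mono r" "AE x in \<mu>. Cauchy (\<lambda>i. S (r i) x)"
    using cauchy_L1_AE_cauchy_subseq[of \<mu> S] L2T_integrable[OF S] L2T_measurable[OF S] by blast
  define f where "f x = lim (\<lambda>i. S (r i) x)" for x
  have f: "f \<in> borel_measurable \<mu>"
    unfolding f_def by (rule borel_measurable_lim_metric) (rule L2T_measurable[OF S])
  have f_lim: "AE x in \<mu>. (\<lambda>i. S (r i) x) \<longlonglongrightarrow> f x"
    using r(2) by eventually_elim (simp add: f_def Cauchy_convergent_iff convergent_LIMSEQ_iff)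
  have distance: "integrable \<mu> (\<lambda>x. (cmod (f x - S m x))\<^sup>2) \<and>
      integral\<^sup>L \<mu> (\<lambda>x. (cmod (f x - S m x))\<^sup>2) \<le> \<epsilon> m" for m
  proof -
    have "(\<lambda>x. f x - S m x) \<in> borel_measurable \<mu>"
      using f L2T_measurable[OF S] by measurable
    moreover have "AE x in \<mu>. (\<lambda>i. S (r i) x - S m x) \<longlonglongrightarrow> f x - S m x"
      using f_lim by eventually_elim (intro tendsto_intros)
    moreover have "integral\<^sup>L \<mu> (\<lambda>x. (cmod (S (r i) x - S m x))\<^sup>2) \<le> \<epsilon> m" if "m \<le> i" for i
      using Cauchy[of m "r i"] seq_suble[OF r(1), of i] that by simp
    ultimately show ?thesis
      using integral_norm_sq_le_if_AE_limit[of "\<lambda>i x. S (r i) x - S m x", OF L2T_measurable[OF L2_diff]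
          _ _ L2T_integrable_norm_sq[OF L2_diff]]
      by blast
  qed
  have "(\<lambda>x. f x - S 0 x) \<in> L2T"
    using distance[of 0] f L2T_measurable[OF S] by (simp add: L2T_iff)
  from L2T_add[OF this S[of 0]] have "f \<in> L2T" by simp
  with distance that show ?thesis by blast
qed

lemma fcoeff_eq_if_L2_approx:
  assumes f: "f \<in> L2T" and S: "\<And>m. S m \<in> L2T" and coeff: "\<And>m. M \<le> m \<Longrightarrow> fcoeff (S m) j = c"
    and distance: "\<And>m. integral\<^sup>L \<mu> (\<lambda>x. (cmod (f x - S m x))\<^sup>2) \<le> \<epsilon> m" and \<epsilon>: "\<epsilon> \<longlonglongrightarrow> 0"
  shows "fcoeff f j = c"
proof -
  have "2 * pi * (cmod (fcoeff f j - c))\<^sup>2 \<le> \<epsilon> m" if "M \<le> m" for m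
  proof -
    have "fcoeff (\<lambda>x. f x - S m x) j = fcoeff f j - c"
      using fcoeff_diff[OF L2T_integrable[OF f] L2T_integrable[OF S]] coeff[OF that] by simp
    then show ?thesis
      using bessel_inequality[OF L2T_diff[OF f S], of "{j}" m] distance[of m] by simp
  qed
  then have "2 * pi * (cmod (fcoeff f j - c))\<^sup>2 \<le> 0"
    by (intro LIMSEQ_le_const[OF \<epsilon>]) auto
  then have "2 * pi * (cmod (fcoeff f j - c))\<^sup>2 = 0"
    by (intro antisym) simp_all
  then show ?thesis by simp
qed

theorem riesz_fischer:
  fixes b :: "int \<Rightarrow> complex"
  assumes summable: "(\<lambda>j. (cmod (b j))\<^sup>2) summable_on UNIV"
  shows "\<exists>f\<in>L2T. (\<forall>j. fcoeff f j = b j) \<and>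
           integral\<^sup>L \<mu> (\<lambda>x. (cmod (f x))\<^sup>2) = 2*pi*infsum (\<lambda>j. (cmod (b j))\<^sup>2) UNIV"
proof -
  define s where "s = infsum (\<lambda>j. (cmod (b j))\<^sup>2) UNIV"
  define W where "W m = {-int m..int m}" for m :: nat
  define P where "P m = (\<Sum>j\<in>W m. (cmod (b j))\<^sup>2)" for m
  define S where "S m = (\<lambda>x. \<Sum>j\<in>W m. b j * ebasis j x)" for m
  have W: "finite (W m)" "m \<le> n \<Longrightarrow> W m \<subseteq> W n" for m n
    unfolding W_def by auto
  have P: "P \<longlonglongrightarrow> s"
    unfolding P_def W_def s_def by (rule symmetric_partial_sums_tendsto_infsum[OF summable]) simp
  have P_le: "P m \<le> s" for m
    unfolding P_def s_def by (rule finite_sum_le_infsum[OF summable W(1)]) auto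
  have S: "S m \<in> L2T" for m
    unfolding S_def by (rule L2T_trig_sum[OF W(1)])
  have Cauchy: "integral\<^sup>L \<mu> (\<lambda>x. (cmod (S n x - S m x))\<^sup>2) \<le> 2*pi*(s - P m)" if "m \<le> n" for m n
  proof -
    have "S n x - S m x = (\<Sum>j\<in>W n - W m. b j * ebasis j x)" for x
      unfolding S_def using W that by (simp add: sum_diff)
    then have "integral\<^sup>L \<mu> (\<lambda>x. (cmod (S n x - S m x))\<^sup>2) = 2*pi*(\<Sum>j\<in>W n - W m. (cmod (b j))\<^sup>2)"
      using integral_norm_sq_trig_sum[of "W n - W m" b] W by simp
    also have "\<dots> = 2*pi*(P n - P m)"
      unfolding P_def using W that by (simp add: sum_diff)
    finally show ?thesis using P_le[of n] by simp
  qed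
  have "(\<lambda>m. 2*pi*(s - P m)) \<longlonglongrightarrow> 2*pi*(s - s)"
    using P by (intro tendsto_intros)
  then have \<epsilon>: "(\<lambda>m. 2*pi*(s - P m)) \<longlonglongrightarrow> 0"
    by (simp only: diff_self mult_zero_right)
  then obtain f where f: "f \<in> L2T"
    and distance: "\<And>m. integral\<^sup>L \<mu> (\<lambda>x. (cmod (f x - S m x))\<^sup>2) \<le> 2*pi*(s - P m)"
    using L2T_Cauchy_limit[of S "\<lambda>m. 2*pi*(s - P m)", OF S Cauchy] by blast
  have coefficients: "fcoeff f j = b j" for j
  proof (rule fcoeff_eq_if_L2_approx[OF f S _ distance \<epsilon>])
    show "fcoeff (S m) j = b j" if "nat \<bar>j\<bar> \<le> m" for m
    proof -
      have "j \<in> W m" using that by (auto simp: W_def)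
      then show ?thesis by (simp add: S_def fcoeff_trig_sum[OF W(1)])
    qed
  qed
  have bessel: "integral\<^sup>L \<mu> (\<lambda>x. (cmod (f x - S m x))\<^sup>2) = integral\<^sup>L \<mu> (\<lambda>x. (cmod (f x))\<^sup>2) - 2*pi*P m" for m
    using bessel_identity[OF f W(1), of m] by (simp add: P_def S_def coefficients)
  have lower: "2*pi*P m \<le> integral\<^sup>L \<mu> (\<lambda>x. (cmod (f x))\<^sup>2)" for m
  proof -
    have "0 \<le> integral\<^sup>L \<mu> (\<lambda>x. (cmod (f x - S m x))\<^sup>2)" by (rule integral_nonneg_AE) simp
    then show ?thesis using bessel[of m] by simp
  qed
  have "integral\<^sup>L \<mu> (\<lambda>x. (cmod (f x))\<^sup>2) \<le> 2 * pi * s"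
    using bessel[of 0] distance[of 0] by (simp add: algebra_simps)
  moreover have "2 * pi * s \<le> integral\<^sup>L \<mu> (\<lambda>x. (cmod (f x))\<^sup>2)"
    by (rule LIMSEQ_le_const2[of "\<lambda>m. 2*pi*P m"]) (use P lower in \<open>auto intro: tendsto_intros\<close>)
  ultimately have "integral\<^sup>L \<mu> (\<lambda>x. (cmod (f x))\<^sup>2) = 2 * pi * s" by linarith
  with f coefficients show ?thesis unfolding s_def by blast
qed

theorem parseval:
  assumes "u \<in> L2T"
  shows "integral\<^sup>L \<mu> (\<lambda>x. (cmod (u x))\<^sup>2) = 2*pi*infsum (\<lambda>j. (cmod (fcoeff u j))\<^sup>2) UNIV"
proof -
  obtain f where f: "f \<in> L2T" "\<forall>j. fcoeff f j = fcoeff u j"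
    "integral\<^sup>L \<mu> (\<lambda>x. (cmod (f x))\<^sup>2) = 2*pi*infsum (\<lambda>j. (cmod (fcoeff u j))\<^sup>2) UNIV"
    using riesz_fischer[OF bessel_summable(1)[OF assms]] by blast
  have "AE x in \<mu>. u x = f x"
    using AE_eq_if_fcoeff_eq[OF L2T_integrable[OF assms] L2T_integrable[OF f(1)]] f(2) by simp
  then have "integral\<^sup>L \<mu> (\<lambda>x. (cmod (u x))\<^sup>2) = integral\<^sup>L \<mu> (\<lambda>x. (cmod (f x))\<^sup>2)"
    by (intro integral_cong_AE) (use assms f(1) L2T_measurable in \<open>auto elim!: eventually_mono\<close>)
  with f(3) show ?thesis by simp
qed

section \<open>Sobolev spaces, derivatives and the Galerkin projection\<close>

lemma HsT_L2T: "u \<in> HsT s \<Longrightarrow> u \<in> L2T"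
  by (simp add: HsT_def)

lemma derivT:
  assumes "u \<in> HsT k" "j \<le> k"
  shows "derivT j u \<in> L2T" "fcoeff (derivT j u) m = (\<i> * of_int m) ^ j * fcoeff u m"
proof -
  let ?b = "\<lambda>m::int. (\<i> * of_int m) ^ j * fcoeff u m"
  have "(\<lambda>m. (cmod (?b m))\<^sup>2) summable_on UNIV"
  proof (rule summable_on_comparison_test)
    show "(\<lambda>m. (cmod (fcoeff u m))\<^sup>2 * (max 1 \<bar>real_of_int m\<bar>) ^ (2 * k)) summable_on UNIV"
      using assms(1) by (simp add: HsT_def)
    fix m :: int
    have "\<bar>real_of_int m\<bar> ^ (2*j) \<le> (max 1 \<bar>real_of_int m\<bar>) ^ (2*j)"
      by (rule power_mono) auto
    also have "\<dots> \<le> (max 1 \<bar>real_of_int m\<bar>) ^ (2*k)"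
      by (rule power_increasing) (use assms(2) in auto)
    finally have "\<bar>real_of_int m\<bar> ^ (2*j) * (cmod (fcoeff u m))\<^sup>2
        \<le> (max 1 \<bar>real_of_int m\<bar>) ^ (2*k) * (cmod (fcoeff u m))\<^sup>2"
      by (rule mult_right_mono) simp
    then show "(cmod (?b m))\<^sup>2 \<le> (cmod (fcoeff u m))\<^sup>2 * (max 1 \<bar>real_of_int m\<bar>) ^ (2 * k)"
      by (simp add: norm_mult norm_power power_mult_distrib power_mult[symmetric] mult.commute)
  qed simp
  from riesz_fischer[OF this] have "\<exists>v. v \<in> L2T \<and> (\<forall>m. fcoeff v m = ?b m)"
    by blast
  then have "derivT j u \<in> L2T \<and> (\<forall>m. fcoeff (derivT j u) m = ?b m)"
    unfolding derivT_def by (rule someI_ex)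
  then show "derivT j u \<in> L2T" "fcoeff (derivT j u) m = ?b m" by auto
qed

lemma trig_sum_HsT:
  assumes "finite F"
  shows "(\<lambda>\<theta>. \<Sum>n\<in>F. b n * ebasis n \<theta>) \<in> HsT s"
proof -
  have "(\<lambda>j. (cmod (fcoeff (\<lambda>\<theta>. \<Sum>n\<in>F. b n * ebasis n \<theta>) j))\<^sup>2 * (max 1 \<bar>real_of_int j\<bar>) ^ (2 * s))
          summable_on UNIV"
    by (rule finite_nonzero_values_imp_summable_on, rule finite_subset[OF _ assms])
      (auto simp: fcoeff_trig_sum[OF assms] split: if_splits)
  then show ?thesis using L2T_trig_sum[OF assms] by (simp add: HsT_def)
qed

lemma derivT_trig_sum_AE:
  assumes "finite F"
  shows "AE \<theta> in \<mu>. derivT j (\<lambda>\<theta>. \<Sum>n\<in>F. b n * ebasis n \<theta>) \<theta>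
                     = (\<Sum>n\<in>F. b n * (\<i> * of_int n) ^ j * ebasis n \<theta>)"
proof (rule AE_eq_if_fcoeff_eq)
  let ?w = "\<lambda>\<theta>. \<Sum>n\<in>F. b n * ebasis n \<theta>"
  have w: "?w \<in> HsT j" by (rule trig_sum_HsT[OF assms])
  show "integrable \<mu> (derivT j ?w)"
    by (rule L2T_integrable[OF derivT(1)[OF w order_refl]])
  show "integrable \<mu> (\<lambda>\<theta>. \<Sum>n\<in>F. b n * (\<i> * of_int n) ^ j * ebasis n \<theta>)"
    by (rule L2T_integrable[OF L2T_trig_sum[OF assms]])
  show "\<forall>m. fcoeff (derivT j ?w) m = fcoeff (\<lambda>\<theta>. \<Sum>n\<in>F. b n * (\<i> * of_int n) ^ j * ebasis n \<theta>) m"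
    using derivT(2)[OF w order_refl] fcoeff_trig_sum[OF assms, of b]
      fcoeff_trig_sum[OF assms, of "\<lambda>n. b n * (\<i> * of_int n) ^ j"]
    by (simp add: mult_ac)
qed

definition freq_window :: "nat \<Rightarrow> int set" where
  "freq_window N = {- Nminus N .. Nplus N}"

lemma finite_freq_window [simp]: "finite (freq_window N)"
  by (simp add: freq_window_def)

lemma not_in_freq_window: "m \<notin> freq_window N \<Longrightarrow> int N \<le> 2 * \<bar>m\<bar>"
  unfolding freq_window_def Nminus_def Nplus_def by (simp add: not_le) presburger

lemma projN_eq: "projN N u = (\<lambda>\<theta>. \<Sum>j\<in>freq_window N. fcoeff u j * ebasis j \<theta>)"
  by (simp add: projN_def freq_window_def)

lemma ranP_eq: "ranP N = range (\<lambda>b \<theta>. \<Sum>j\<in>freq_window N. b j * ebasis j \<theta>)"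
  by (auto simp: ranP_def freq_window_def)

lemma fcoeff_projN: "fcoeff (projN N g) m = (if m \<in> freq_window N then fcoeff g m else 0)"
  unfolding projN_eq by (rule fcoeff_trig_sum) simp

lemma projN_L2T: "projN N g \<in> L2T"
  unfolding projN_eq by (rule L2T_trig_sum) simp

lemma projN_trig_sum:
  "projN N (\<lambda>\<theta>. \<Sum>j\<in>freq_window N. b j * ebasis j \<theta>) = (\<lambda>\<theta>. \<Sum>j\<in>freq_window N. b j * ebasis j \<theta>)"
  unfolding projN_eq by (simp add: fcoeff_trig_sum cong: sum.cong)

lemma ranP_HsT: "u \<in> ranP N \<Longrightarrow> u \<in> HsT s"
  unfolding ranP_eq by (auto intro: trig_sum_HsT)

lemma projN_ranP: "u \<in> ranP N \<Longrightarrow> projN N u = u"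
  unfolding ranP_eq by (auto simp: projN_trig_sum)

section \<open>The operators in Fourier variables\<close>

text \<open>\<open>\<L>\<^sub>0\<close> is the Fourier multiplier \<open>symbol q k c\<close>.\<close>
definition symbol :: "nat \<Rightarrow> nat \<Rightarrow> (nat \<Rightarrow> complex) \<Rightarrow> int \<Rightarrow> complex" where
  "symbol q k c m = (\<Sum>j\<in>{q..k}. c j * (\<i> * of_int m) ^ j)"

text \<open>The matrix of \<open>\<L>\<^sub>1\<close> in the Fourier basis: \<open>coupling p a m n\<close> is the \<open>m\<close>-th coefficient of
  \<open>\<L>\<^sub>1 e\<^sub>n\<close>.\<close>
definition coupling :: "nat \<Rightarrow> (nat \<Rightarrow> real \<Rightarrow> complex) \<Rightarrow> int \<Rightarrow> int \<Rightarrow> complex" where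
  "coupling p a m n = (\<Sum>j\<in>{0..p}. (\<i> * of_int n) ^ j * fcoeff (\<lambda>\<theta>. a j \<theta> * ebasis n \<theta>) m)"

lemma L0op_L2T: "u \<in> HsT k \<Longrightarrow> L0op q k c u \<in> L2T"
  unfolding L0op_def by (intro L2T_sum L2T_cmult derivT(1)) auto

lemma fcoeff_L0op:
  assumes "u \<in> HsT k"
  shows "fcoeff (L0op q k c u) m = symbol q k c m * fcoeff u m"
proof -
  have "fcoeff (L0op q k c u) m = (\<Sum>j\<in>{q..k}. fcoeff (\<lambda>\<theta>. c j * derivT j u \<theta>) m)"
    unfolding L0op_def
    by (rule fcoeff_sum) (use derivT(1)[OF assms] in \<open>auto intro!: L2T_integrable L2T_cmult\<close>)
  also have "\<dots> = (\<Sum>j\<in>{q..k}. c j * ((\<i> * of_int m) ^ j * fcoeff u m))"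
    by (intro sum.cong refl) (simp add: fcoeff_cmult derivT(2)[OF assms])
  also have "\<dots> = symbol q k c m * fcoeff u m"
    by (simp add: symbol_def sum_distrib_left mult_ac)
  finally show ?thesis .
qed

lemma fcoeff_L1op_trig_sum:
  assumes a: "\<forall>j\<le>p. a j \<in> L2T" and F: "finite F"
  shows "fcoeff (L1op p a (\<lambda>\<theta>. \<Sum>n\<in>F. b n * ebasis n \<theta>)) m = (\<Sum>n\<in>F. b n * coupling p a m n)"
proof -
  let ?w = "\<lambda>\<theta>. \<Sum>n\<in>F. b n * ebasis n \<theta>"
  let ?g = "\<lambda>\<theta>. \<Sum>j\<in>{0..p}. \<Sum>n\<in>F. (b n * (\<i> * of_int n) ^ j) * (a j \<theta> * ebasis n \<theta>)"
  have w: "?w \<in> HsT j" for j by (rule trig_sum_HsT[OF F])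
  have a_meas: "a j \<in> borel_measurable \<mu>" if "j \<in> {0..p}" for j
    using a that L2T_measurable by auto
  have a_ebasis: "integrable \<mu> (\<lambda>\<theta>. a j \<theta> * ebasis n \<theta>)" if "j \<in> {0..p}" for j n
    using a that by (auto intro: integrable_mult_ebasis L2T_integrable)
  have "AE \<theta> in \<mu>. \<forall>j\<in>{0..p}. derivT j ?w \<theta> = (\<Sum>n\<in>F. b n * (\<i> * of_int n) ^ j * ebasis n \<theta>)"
    by (subst AE_finite_all) (auto intro: derivT_trig_sum_AE[OF F])
  then have "AE \<theta> in \<mu>. L1op p a ?w \<theta> = ?g \<theta>"
    by eventually_elim (auto simp: L1op_def sum_distrib_left mult_ac intro!: sum.cong)
  then have "fcoeff (L1op p a ?w) m = fcoeff ?g m"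
  proof (rule fcoeff_cong_AE[rotated 2])
    show "L1op p a ?w \<in> borel_measurable \<mu>"
      unfolding L1op_def
      by (intro borel_measurable_sum borel_measurable_times a_meas L2T_measurable[OF derivT(1)[OF w order_refl]])
    show "?g \<in> borel_measurable \<mu>"
      by (intro borel_measurable_sum borel_measurable_times borel_measurable_const a_meas ebasis_measurable)
  qed
  also have "\<dots> = (\<Sum>j\<in>{0..p}. fcoeff (\<lambda>\<theta>. \<Sum>n\<in>F. (b n * (\<i> * of_int n) ^ j) * (a j \<theta> * ebasis n \<theta>)) m)"
    by (rule fcoeff_sum) (auto intro!: Bochner_Integration.integrable_sum a_ebasis)
  also have "\<dots> = (\<Sum>j\<in>{0..p}. \<Sum>n\<in>F. (b n * (\<i> * of_int n) ^ j) * fcoeff (\<lambda>\<theta>. a j \<theta> * ebasis n \<theta>) m)"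
  proof (rule sum.cong[OF refl])
    fix j assume "j \<in> {0..p}"
    then show "fcoeff (\<lambda>\<theta>. \<Sum>n\<in>F. (b n * (\<i> * of_int n) ^ j) * (a j \<theta> * ebasis n \<theta>)) m =
          (\<Sum>n\<in>F. (b n * (\<i> * of_int n) ^ j) * fcoeff (\<lambda>\<theta>. a j \<theta> * ebasis n \<theta>) m)"
      by (subst fcoeff_sum[OF F]) (auto intro!: Bochner_Integration.integrable_mult_right a_ebasis simp: fcoeff_cmult)
  qed
  also have "\<dots> = (\<Sum>n\<in>F. b n * coupling p a m n)"
    unfolding coupling_def by (subst sum.swap) (simp add: sum_distrib_left mult_ac)
  finally show ?thesis .
qed

lemma fcoeff_LN_shifted:
  fixes z :: complex and c :: "nat \<Rightarrow> complex" and N q :: nat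
  assumes a: "\<forall>j\<le>p. a j \<in> L2T" and u: "u \<in> HsT k"
  defines "G \<equiv> \<lambda>\<theta>. L0op q k c u \<theta> + projN N (L1op p a (projN N u)) \<theta> - z * u \<theta>"
  shows "G \<in> L2T"
    and "fcoeff G m = (symbol q k c m - z) * fcoeff u m +
           (if m \<in> freq_window N then (\<Sum>n\<in>freq_window N. fcoeff u n * coupling p a m n) else 0)"
proof -
  have L0: "L0op q k c u \<in> L2T" by (rule L0op_L2T[OF u])
  have zu: "(\<lambda>\<theta>. z * u \<theta>) \<in> L2T" by (rule L2T_cmult[OF HsT_L2T[OF u]])
  have sum: "(\<lambda>\<theta>. L0op q k c u \<theta> + projN N (L1op p a (projN N u)) \<theta>) \<in> L2T"
    by (rule L2T_add[OF L0 projN_L2T])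
  show "G \<in> L2T" unfolding G_def by (rule L2T_diff[OF sum zu])
  have "fcoeff (projN N (L1op p a (projN N u))) m =
      (if m \<in> freq_window N then (\<Sum>n\<in>freq_window N. fcoeff u n * coupling p a m n) else 0)"
    unfolding fcoeff_projN projN_eq[of N u] using fcoeff_L1op_trig_sum[OF a finite_freq_window] by simp
  then show "fcoeff G m = (symbol q k c m - z) * fcoeff u m +
           (if m \<in> freq_window N then (\<Sum>n\<in>freq_window N. fcoeff u n * coupling p a m n) else 0)"
    unfolding G_def
    using fcoeff_diff[OF L2T_integrable[OF sum] L2T_integrable[OF zu]]
      fcoeff_add[OF L2T_integrable[OF L0] L2T_integrable[OF projN_L2T]]
    by (simp add: fcoeff_cmult fcoeff_L0op[OF u] algebra_simps)
qed

section \<open>Growth of the symbol\<close>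

lemma norm_symbol_lower:
  assumes "q \<le> k" "k \<ge> 1" "1 \<le> \<bar>real_of_int m\<bar>"
  shows "\<bar>real_of_int m\<bar> ^ (k-1) * (cmod (c k) * \<bar>real_of_int m\<bar> - (\<Sum>j\<in>{q..<k}. cmod (c j)))
           \<le> cmod (symbol q k c m)"
proof -
  define x where "x = \<bar>real_of_int m\<bar>"
  define S where "S = (\<Sum>j\<in>{q..<k}. c j * (\<i> * of_int m) ^ j)"
  have x: "1 \<le> x" "cmod (\<i> * complex_of_int m) = x"
    using assms(3) by (simp_all add: x_def norm_mult)
  have symbol: "symbol q k c m = c k * (\<i> * of_int m) ^ k + S"
    using assms(1) by (simp add: symbol_def S_def atLeastAtMost_insertL[symmetric] atLeastLessThanSuc_atLeastAtMost[symmetric])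
  have "cmod S \<le> (\<Sum>j\<in>{q..<k}. cmod (c j) * x ^ j)"
    unfolding S_def using norm_sum[of "\<lambda>j. c j * (\<i> * of_int m) ^ j"] by (simp add: norm_mult norm_power x x_def)
  also have "\<dots> \<le> (\<Sum>j\<in>{q..<k}. cmod (c j) * x ^ (k-1))"
    by (intro sum_mono mult_left_mono power_increasing) (use x in auto)
  finally have "cmod S \<le> (\<Sum>j\<in>{q..<k}. cmod (c j)) * x ^ (k-1)"
    by (simp add: sum_distrib_right)
  moreover have "cmod (c k * (\<i> * of_int m) ^ k) = cmod (c k) * (x ^ (k-1) * x)"
    using assms(2) by (cases k) (simp_all add: norm_mult norm_power x x_def power_Suc2 mult.commute)
  ultimately show ?thesis
    using norm_diff_ineq[of "c k * (\<i> * of_int m) ^ k" S]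
    unfolding symbol x_def[symmetric] by (simp add: algebra_simps)
qed

lemma norm_symbol_ge_half_leading:
  assumes "c k \<noteq> 0" "q \<le> k" "k \<ge> 1"
  obtains R where "\<And>m. R \<le> \<bar>real_of_int m\<bar> \<Longrightarrow> cmod (c k) / 2 * \<bar>real_of_int m\<bar> ^ k \<le> cmod (symbol q k c m)"
proof
  define K where "K = cmod (c k)"
  define S where "S = (\<Sum>j\<in>{q..<k}. cmod (c j))"
  have K: "K > 0" using assms(1) by (simp add: K_def)
  fix m assume m: "max 1 (2 * S / K) \<le> \<bar>real_of_int m\<bar>"
  define x where "x = \<bar>real_of_int m\<bar>"
  have x: "1 \<le> x" "2 * S \<le> K * x" using m K by (auto simp: x_def field_simps)
  have "x ^ k = x ^ (k-1) * x" using assms(3) by (cases k) (simp_all add: power_Suc2)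
  then have "K / 2 * x ^ k = x ^ (k-1) * (K * x - K * x / 2)" by (simp add: algebra_simps)
  also have "\<dots> \<le> x ^ (k-1) * (K * x - S)"
    using x by (intro mult_left_mono) auto
  also have "\<dots> \<le> cmod (symbol q k c m)"
    using norm_symbol_lower[OF assms(2,3), of m c] x by (simp add: x_def K_def S_def)
  finally show "cmod (c k) / 2 * \<bar>real_of_int m\<bar> ^ k \<le> cmod (symbol q k c m)"
    by (simp add: x_def K_def)
qed

lemma symbol_shift_growth:
  assumes "c k \<noteq> 0" "q \<le> k" "k \<ge> 1"
  obtains R \<beta> where "\<beta> > 0" "\<And>m. R \<le> \<bar>real_of_int m\<bar> \<Longrightarrow> \<beta> * \<bar>real_of_int m\<bar> ^ k \<le> cmod (symbol q k c m - z)"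
proof -
  define K where "K = cmod (c k)"
  have K: "K > 0" using assms(1) by (simp add: K_def)
  obtain R where R: "\<And>m. R \<le> \<bar>real_of_int m\<bar> \<Longrightarrow> K / 2 * \<bar>real_of_int m\<bar> ^ k \<le> cmod (symbol q k c m)"
    using norm_symbol_ge_half_leading[of c k q, OF assms] unfolding K_def by blast
  have "K / 4 * \<bar>real_of_int m\<bar> ^ k \<le> cmod (symbol q k c m - z)"
    if m: "max R (max 1 (4 * cmod z / K)) \<le> \<bar>real_of_int m\<bar>" for m
  proof -
    define x where "x = \<bar>real_of_int m\<bar>"
    have x: "1 \<le> x" "4 * cmod z / K \<le> x" using m by (auto simp: x_def)
    have "x ^ 1 \<le> x ^ k" using power_increasing[of 1 k x] x(1) assms(3) by simp
    then have "4 * cmod z / K \<le> x ^ k" using x(2) by simp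
    then have z: "cmod z \<le> K / 4 * x ^ k" using K by (simp add: field_simps)
    have "K / 4 * x ^ k = K / 2 * x ^ k - K / 4 * x ^ k" by simp
    also have "\<dots> \<le> cmod (symbol q k c m) - cmod z" using R[of m] m z by (simp add: x_def)
    also have "\<dots> \<le> cmod (symbol q k c m - z)" by (rule norm_triangle_ineq2)
    finally show ?thesis by (simp add: x_def)
  qed
  moreover have "K / 4 > 0" using K by simp
  ultimately show ?thesis using that by blast
qed

text \<open>Outside the window \<open>|m| \<ge> N/2\<close>, while the symbol grows like \<open>|m|\<^sup>k\<close>.\<close>
lemma symbol_large_outside_window:
  assumes "c k \<noteq> 0" "q \<le> k" "k \<ge> 1"
  obtains N0 where "\<And>N m. N0 \<le> N \<Longrightarrow> m \<notin> freq_window N \<Longrightarrow> c0 * real N ^ (k-1) + 1 \<le> cmod (symbol q k c m)"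
proof -
  define K where "K = cmod (c k)"
  have K: "K > 0" using assms(1) by (simp add: K_def)
  obtain R where R: "\<And>m. R \<le> \<bar>real_of_int m\<bar> \<Longrightarrow> K / 2 * \<bar>real_of_int m\<bar> ^ k \<le> cmod (symbol q k c m)"
    using norm_symbol_ge_half_leading[of c k q, OF assms] unfolding K_def by blast
  have "c0 * real N ^ (k-1) + 1 \<le> cmod (symbol q k c m)"
    if N: "nat \<lceil>max (2 * R) (max 1 (2 ^ (k+1) * (\<bar>c0\<bar> + 1) / K))\<rceil> \<le> N"
    and m: "m \<notin> freq_window N" for N m
  proof -
    have "max (2 * R) (max 1 (2 ^ (k+1) * (\<bar>c0\<bar> + 1) / K)) \<le> real N"
      using N by (simp add: nat_le_iff ceiling_le_iff)
    then have N_ge: "2 * R \<le> real N" "1 \<le> real N" "2 ^ (k+1) * (\<bar>c0\<bar> + 1) \<le> K * real N"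
      using K by (auto simp: pos_divide_le_eq mult.commute)
    have m_ge: "real N \<le> 2 * \<bar>real_of_int m\<bar>"
      using not_in_freq_window[OF m] by linarith
    have "c0 * real N ^ (k-1) + 1 \<le> (\<bar>c0\<bar> + 1) * real N ^ (k-1)"
    proof -
      have "c0 * real N ^ (k-1) \<le> \<bar>c0\<bar> * real N ^ (k-1)" by (intro mult_right_mono) auto
      moreover have "1 \<le> real N ^ (k-1)" using N_ge(2) by simp
      ultimately show ?thesis by (simp add: distrib_right)
    qed
    also have "\<dots> \<le> K * real N / 2 ^ (k+1) * real N ^ (k-1)"
      using N_ge(3) by (intro mult_right_mono) (simp_all add: field_simps)
    also have "\<dots> = K / 2 * (real N / 2) ^ k"
      using assms(3) by (cases k) (simp_all add: power_divide power_Suc2 field_simps)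
    also have "\<dots> \<le> K / 2 * \<bar>real_of_int m\<bar> ^ k"
      using m_ge K by (intro mult_left_mono power_mono) auto
    also have "\<dots> \<le> cmod (symbol q k c m)"
      using R N_ge(1) m_ge by simp
    finally show ?thesis .
  qed
  then show ?thesis using that by blast
qed

section \<open>Invertibility of block-diagonal Fourier operators\<close>

lemma injective_matrix_invertible:
  fixes B :: "nat \<Rightarrow> nat \<Rightarrow> complex"
  assumes inj: "\<And>x. \<forall>i<n. (\<Sum>l<n. B i l * x l) = 0 \<Longrightarrow> \<forall>l<n. x l = 0"
  obtains C where "\<And>i l. i < n \<Longrightarrow> l < n \<Longrightarrow> (\<Sum>j<n. B i j * C j l) = (if i = l then 1 else 0)"
    "\<And>i l. i < n \<Longrightarrow> l < n \<Longrightarrow> (\<Sum>j<n. C i j * B j l) = (if i = l then 1 else 0)"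
proof -
  define A where "A = mat n n (\<lambda>(i,j). B i j)"
  have A: "A \<in> carrier_mat n n" unfolding A_def by simp
  have det: "det A \<noteq> 0"
  proof
    assume "det A = 0"
    then obtain v where v: "v \<in> carrier_vec n" "v \<noteq> 0\<^sub>v n" "A *\<^sub>v v = 0\<^sub>v n"
      using det_0_iff_vec_prod_zero[OF A] by blast
    have "\<forall>i<n. (\<Sum>l<n. B i l * v $ l) = 0"
    proof (intro allI impI)
      fix i assume i: "i < n"
      have "(A *\<^sub>v v) $ i = (\<Sum>l<n. B i l * v $ l)"
        using i v(1) unfolding A_def by (simp add: scalar_prod_def lessThan_atLeast0)
      then show "(\<Sum>l<n. B i l * v $ l) = 0" using v(3) i by simp
    qed
    then have "\<forall>l<n. v $ l = 0" by (rule inj)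
    then have "v = 0\<^sub>v n" using v(1) by (intro eq_vecI) auto
    with v(2) show False by simp
  qed
  define C where "C i j = adj_mat A $$ (i,j) / det A" for i j
  have adj: "adj_mat A \<in> carrier_mat n n" by (rule adj_mat(1)[OF A])
  show ?thesis
  proof
    fix i l assume il: "i < n" "l < n"
    have "(A * adj_mat A) $$ (i,l) = (det A \<cdot>\<^sub>m 1\<^sub>m n) $$ (i,l)" using adj_mat(2)[OF A] by simp
    moreover have "(A * adj_mat A) $$ (i,l) = (\<Sum>j<n. B i j * adj_mat A $$ (j,l))"
      using il adj unfolding A_def by (simp add: scalar_prod_def lessThan_atLeast0)
    ultimately have "(\<Sum>j<n. B i j * adj_mat A $$ (j,l)) = (if i = l then det A else 0)"
      using il by simp
    then show "(\<Sum>j<n. B i j * C j l) = (if i = l then 1 else 0)"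
      using det by (simp add: C_def sum_divide_distrib[symmetric])
    have "(adj_mat A * A) $$ (i,l) = (det A \<cdot>\<^sub>m 1\<^sub>m n) $$ (i,l)" using adj_mat(3)[OF A] by simp
    moreover have "(adj_mat A * A) $$ (i,l) = (\<Sum>j<n. adj_mat A $$ (i,j) * B j l)"
      using il adj unfolding A_def by (simp add: scalar_prod_def lessThan_atLeast0)
    ultimately have "(\<Sum>j<n. adj_mat A $$ (i,j) * B j l) = (if i = l then det A else 0)"
      using il by simp
    then show "(\<Sum>j<n. C i j * B j l) = (if i = l then 1 else 0)"
      using det by (simp add: C_def sum_divide_distrib[symmetric])
  qed
qed

lemma injective_matrix_on_finite_set_invertible:
  fixes B :: "'a \<Rightarrow> 'a \<Rightarrow> complex"
  assumes W: "finite W"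
    and inj: "\<And>x. \<forall>m\<in>W. (\<Sum>w\<in>W. B m w * x w) = 0 \<Longrightarrow> \<forall>w\<in>W. x w = 0"
  obtains C where "\<And>m l. m \<in> W \<Longrightarrow> l \<in> W \<Longrightarrow> (\<Sum>w\<in>W. B m w * C w l) = (if m = l then 1 else 0)"
    "\<And>m l. m \<in> W \<Longrightarrow> l \<in> W \<Longrightarrow> (\<Sum>w\<in>W. C m w * B w l) = (if m = l then 1 else 0)"
proof -
  define n where "n = card W"
  obtain h where h: "bij_betw h {..<n} W"
    using ex_bij_betw_nat_finite[OF W] unfolding n_def atLeast0LessThan by blast
  define g where "g = inv_into {..<n} h"
  have hg: "w \<in> W \<Longrightarrow> h (g w) = w" and g: "w \<in> W \<Longrightarrow> g w < n" for w
    using h unfolding g_def by (auto simp: bij_betw_inv_into_right bij_betw_def inv_into_into)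
  have gh: "i < n \<Longrightarrow> g (h i) = i" and hW: "i < n \<Longrightarrow> h i \<in> W" for i
    using h unfolding g_def by (auto simp: bij_betw_inv_into_left bij_betw_def)
  have reindex: "(\<Sum>w\<in>W. F w) = (\<Sum>l<n. F (h l))" for F :: "'a \<Rightarrow> complex"
    using sum.reindex_bij_betw[OF h, of F] by simp
  have "\<forall>l<n. x l = 0" if x: "\<forall>i<n. (\<Sum>l<n. B (h i) (h l) * x l) = 0" for x
  proof -
    have "\<forall>m\<in>W. (\<Sum>w\<in>W. B m w * x (g w)) = 0"
    proof
      fix m assume m: "m \<in> W"
      have "(\<Sum>w\<in>W. B m w * x (g w)) = (\<Sum>l<n. B (h (g m)) (h l) * x l)"
        using hg[OF m] by (simp add: reindex gh)
      also have "\<dots> = 0" using x g[OF m] by blast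
      finally show "(\<Sum>w\<in>W. B m w * x (g w)) = 0" .
    qed
    then have "\<forall>w\<in>W. x (g w) = 0" by (rule inj)
    then show ?thesis using hW gh by metis
  qed
  then obtain C' where C': "\<And>i l. i < n \<Longrightarrow> l < n \<Longrightarrow> (\<Sum>j<n. B (h i) (h j) * C' j l) = (if i = l then 1 else 0)"
    "\<And>i l. i < n \<Longrightarrow> l < n \<Longrightarrow> (\<Sum>j<n. C' i j * B (h j) (h l)) = (if i = l then 1 else 0)"
    using injective_matrix_invertible[of n "\<lambda>i j. B (h i) (h j)"] by blast
  show ?thesis
  proof
    fix m l assume m: "m \<in> W" and l: "l \<in> W"
    have "g m = g l \<longleftrightarrow> m = l" using hg m l by metis
    then show "(\<Sum>w\<in>W. B m w * C' (g w) (g l)) = (if m = l then 1 else 0)"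
      and "(\<Sum>w\<in>W. C' (g m) (g w) * B w l) = (if m = l then 1 else 0)"
      using C'(1)[OF g[OF m] g[OF l]] C'(2)[OF g[OF m] g[OF l]] by (simp_all add: reindex gh hg m l)
  qed
qed

lemma finite_matrix_bound:
  fixes C :: "'a \<Rightarrow> 'a \<Rightarrow> complex"
  assumes "finite W"
  obtains K where "K \<ge> 0"
    "\<And>x y. (\<And>m. m \<in> W \<Longrightarrow> x m = (\<Sum>l\<in>W. C m l * y l)) \<Longrightarrow>
       (\<Sum>m\<in>W. (cmod (x m))\<^sup>2) \<le> K * (\<Sum>l\<in>W. (cmod (y l))\<^sup>2)"
proof
  define Cs where "Cs = (\<Sum>m\<in>W. \<Sum>l\<in>W. cmod (C m l))"
  have Cs: "cmod (C m l) \<le> Cs" if "m \<in> W" "l \<in> W" for m l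
  proof -
    have "cmod (C m l) \<le> (\<Sum>l\<in>W. cmod (C m l))" using that assms by (intro member_le_sum) auto
    also have "\<dots> \<le> Cs" unfolding Cs_def using that assms by (intro member_le_sum sum_nonneg) auto
    finally show ?thesis .
  qed
  have Cs0: "0 \<le> Cs" unfolding Cs_def by (intro sum_nonneg) auto
  show "0 \<le> real (card W) ^ 3 * Cs\<^sup>2" by simp
  fix x y assume xy: "\<And>m. m \<in> W \<Longrightarrow> x m = (\<Sum>l\<in>W. C m l * y l)"
  define Y where "Y = (\<Sum>l\<in>W. (cmod (y l))\<^sup>2)"
  have y: "cmod (y l) \<le> sqrt Y" if "l \<in> W" for l
    using member_le_sum[of l W "\<lambda>l. (cmod (y l))\<^sup>2"] that assms by (simp add: Y_def real_le_rsqrt)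
  have "(cmod (x m))\<^sup>2 \<le> (real (card W) * Cs)\<^sup>2 * Y" if "m \<in> W" for m
  proof -
    have "cmod (x m) \<le> (\<Sum>l\<in>W. cmod (C m l) * cmod (y l))"
      using xy[OF that] norm_sum[of "\<lambda>l. C m l * y l" W] by (simp add: norm_mult)
    also have "\<dots> \<le> (\<Sum>l\<in>W. Cs * sqrt Y)"
      using Cs that y Cs0 by (intro sum_mono mult_mono) auto
    finally have "cmod (x m) \<le> real (card W) * Cs * sqrt Y" by simp
    then have "(cmod (x m))\<^sup>2 \<le> (real (card W) * Cs * sqrt Y)\<^sup>2" by (intro power_mono) auto
    then show ?thesis by (simp add: power_mult_distrib Y_def sum_nonneg)
  qed
  then have "(\<Sum>m\<in>W. (cmod (x m))\<^sup>2) \<le> (\<Sum>m\<in>W. (real (card W) * Cs)\<^sup>2 * Y)"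
    by (rule sum_mono)
  then show "(\<Sum>m\<in>W. (cmod (x m))\<^sup>2) \<le> real (card W) ^ 3 * Cs\<^sup>2 * (\<Sum>l\<in>W. (cmod (y l))\<^sup>2)"
    by (simp add: Y_def power_mult_distrib power3_eq_cube power2_eq_square mult_ac)
qed

lemma infsum_split_finite:
  fixes F :: "'a \<Rightarrow> real"
  assumes "finite W" "F summable_on UNIV"
  shows "infsum F UNIV = (\<Sum>m\<in>W. F m) + infsum F (UNIV - W)"
proof -
  have "infsum F (W \<union> (UNIV - W)) = infsum F W + infsum F (UNIV - W)"
    by (rule infsum_Un_disjoint) (use summable_on_subset_banach[OF assms(2)] in auto)
  then show ?thesis using assms(1) by (simp add: infsum_finite)
qed

lemma infsum_le_if_blockwise_le:
  fixes x y :: "'a \<Rightarrow> real"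
  assumes "finite W" "x summable_on UNIV" "y summable_on UNIV" "\<And>m. 0 \<le> y m"
    and "sum x W \<le> K * sum y W" "\<And>m. m \<notin> W \<Longrightarrow> x m \<le> y m"
  shows "infsum x UNIV \<le> max 1 K * infsum y UNIV"
proof -
  have "infsum x (UNIV - W) \<le> infsum y (UNIV - W)"
    using assms(2,3,6) by (intro infsum_mono) (auto intro: summable_on_subset_banach)
  moreover have "infsum y (UNIV - W) \<le> max 1 K * infsum y (UNIV - W)"
  proof -
    have "0 \<le> infsum y (UNIV - W)" using assms(4) by (intro infsum_nonneg)
    from mult_right_mono[OF _ this, of 1 "max 1 K"] show ?thesis by simp
  qed
  moreover have "K * sum y W \<le> max 1 K * sum y W"
    using assms(4) by (intro mult_right_mono) (auto simp: sum_nonneg)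
  ultimately show ?thesis
    unfolding infsum_split_finite[OF assms(1,2)] infsum_split_finite[OF assms(1,3)] distrib_left
    using assms(5) by linarith
qed

text \<open>The shape of \<open>\<L>\<^sub>N - z\<close> in Fourier variables: a matrix block \<open>B\<close> on the window \<open>W\<close>
  and the multiplier \<open>d = symbol - z\<close> off it.\<close>
locale block_fourier_operator =
  fixes k :: nat and G :: "cfun \<Rightarrow> cfun" and W :: "int set"
    and B :: "int \<Rightarrow> int \<Rightarrow> complex" and d :: "int \<Rightarrow> complex" and \<beta> R :: real
  assumes finite_W: "finite W"
    and G_L2T: "\<And>u. u \<in> HsT k \<Longrightarrow> G u \<in> L2T"
    and fcoeff_G_inside: "\<And>u m. u \<in> HsT k \<Longrightarrow> m \<in> W \<Longrightarrow> fcoeff (G u) m = (\<Sum>n\<in>W. B m n * fcoeff u n)"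
    and fcoeff_G_outside: "\<And>u m. u \<in> HsT k \<Longrightarrow> m \<notin> W \<Longrightarrow> fcoeff (G u) m = d m * fcoeff u m"
    and B_injective: "\<And>x. \<forall>m\<in>W. (\<Sum>n\<in>W. B m n * x n) = 0 \<Longrightarrow> \<forall>n\<in>W. x n = 0"
    and d_ge_1: "\<And>m. m \<notin> W \<Longrightarrow> 1 \<le> cmod (d m)"
    and \<beta>_pos: "\<beta> > 0"
    and d_growth: "\<And>m. R \<le> \<bar>real_of_int m\<bar> \<Longrightarrow> \<beta> * \<bar>real_of_int m\<bar> ^ k \<le> cmod (d m)"
begin

lemma B_inverse:
  obtains C where "\<And>m l. m \<in> W \<Longrightarrow> l \<in> W \<Longrightarrow> (\<Sum>w\<in>W. B m w * C w l) = (if m = l then 1 else 0)"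
    "\<And>m l. m \<in> W \<Longrightarrow> l \<in> W \<Longrightarrow> (\<Sum>w\<in>W. C m w * B w l) = (if m = l then 1 else 0)"
proof (rule injective_matrix_on_finite_set_invertible[OF finite_W])
  show "\<forall>n\<in>W. x n = 0" if "\<forall>m\<in>W. (\<Sum>n\<in>W. B m n * x n) = 0" for x
    by (rule B_injective[OF that])
qed (rule that)

lemma d_nonzero: "m \<notin> W \<Longrightarrow> d m \<noteq> 0"
  using d_ge_1[of m] by auto

lemma injective:
  assumes u: "u \<in> HsT k" and Gu: "aeqT (G u) (\<lambda>_. 0)"
  shows "aeqT u (\<lambda>_. 0)"
proof -
  have G0: "fcoeff (G u) m = 0" for m
    using fcoeff_eq_0_if_aeqT_0[OF L2T_measurable[OF G_L2T[OF u]] Gu] .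
  have "fcoeff u m = 0" for m
  proof (cases "m \<in> W")
    case True
    have "\<forall>m\<in>W. (\<Sum>n\<in>W. B m n * fcoeff u n) = 0"
      using fcoeff_G_inside[OF u] G0 by metis
    then have "\<forall>n\<in>W. fcoeff u n = 0" by (rule B_injective)
    with True show ?thesis by simp
  next
    case False
    then show ?thesis using G0[of m] fcoeff_G_outside[OF u False] d_nonzero[OF False] by simp
  qed
  then have "AE x in \<mu>. u x = 0"
    using fourier_unique[OF L2T_integrable[OF HsT_L2T[OF u]]] by blast
  then show ?thesis by (simp add: aeqT_iff_AE)
qed

text \<open>Prescribing arbitrary coefficients on \<open>W\<close> and dividing square-summable ones by \<open>d\<close>
  off \<open>W\<close> gains the \<open>k\<close> derivatives needed for \<open>HsT k\<close>.\<close>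
lemma weighted_summable:
  fixes x y :: "int \<Rightarrow> complex"
  assumes y: "(\<lambda>m. (cmod (y m))\<^sup>2) summable_on UNIV"
  defines "b \<equiv> \<lambda>m. if m \<in> W then x m else y m / d m"
  shows "(\<lambda>m. (cmod (b m))\<^sup>2 * (max 1 \<bar>real_of_int m\<bar>) ^ (2 * k)) summable_on UNIV"
proof -
  define T where "T = max R 1"
  define Big where "Big = {m. m \<notin> W \<and> T \<le> \<bar>real_of_int m\<bar>}"
  have "UNIV - Big \<subseteq> W \<union> {-\<lceil>T\<rceil>..\<lceil>T\<rceil>}"
    by (auto simp: Big_def abs_le_iff not_le) linarith+
  then have small: "finite (UNIV - Big)"
    by (rule finite_subset) (use finite_W in simp)
  have "(\<lambda>m. (cmod (b m))\<^sup>2 * (max 1 \<bar>real_of_int m\<bar>) ^ (2 * k)) summable_on Big"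
  proof (rule summable_on_comparison_test)
    show "(\<lambda>m. (cmod (y m))\<^sup>2 / \<beta>\<^sup>2) summable_on Big"
      using summable_on_subset_banach[OF summable_on_cmult_left[OF y, of "1/\<beta>\<^sup>2"]] by simp
    fix m assume "m \<in> Big"
    then have m: "m \<notin> W" "1 \<le> \<bar>real_of_int m\<bar>" "R \<le> \<bar>real_of_int m\<bar>"
      by (auto simp: Big_def T_def)
    define X where "X = \<bar>real_of_int m\<bar> ^ k"
    have X: "0 < X" using m(2) by (simp add: X_def)
    have dX: "(\<beta> * X)\<^sup>2 \<le> (cmod (d m))\<^sup>2"
      using d_growth[OF m(3)] \<beta>_pos X by (intro power_mono) (auto simp: X_def)
    moreover have "(max 1 \<bar>real_of_int m\<bar>) ^ (2 * k) = X\<^sup>2"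
      using m(2) by (simp add: X_def power_mult[symmetric] mult.commute)
    ultimately show "(cmod (b m))\<^sup>2 * (max 1 \<bar>real_of_int m\<bar>) ^ (2 * k) \<le> (cmod (y m))\<^sup>2 / \<beta>\<^sup>2"
      using m(1) \<beta>_pos X d_nonzero[OF m(1)] mult_right_mono[OF dX, of "(cmod (y m))\<^sup>2"]
      by (simp add: b_def norm_divide power_divide field_simps power_mult_distrib mult_ac)
  qed simp
  then have "(\<lambda>m. (cmod (b m))\<^sup>2 * (max 1 \<bar>real_of_int m\<bar>) ^ (2 * k)) summable_on (Big \<union> (UNIV - Big))"
    by (intro summable_on_union summable_on_finite[OF small])
  then show ?thesis by simp
qed

lemma surjective:
  assumes f: "f \<in> L2T"
  shows "\<exists>u\<in>HsT k. aeqT (G u) f"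
proof -
  obtain C where C: "\<And>m l. m \<in> W \<Longrightarrow> l \<in> W \<Longrightarrow> (\<Sum>w\<in>W. B m w * C w l) = (if m = l then 1 else 0)"
    "\<And>m l. m \<in> W \<Longrightarrow> l \<in> W \<Longrightarrow> (\<Sum>w\<in>W. C m w * B w l) = (if m = l then 1 else 0)"
    by (rule B_inverse) blast
  define b where "b m = (if m \<in> W then (\<Sum>l\<in>W. C m l * fcoeff f l) else fcoeff f m / d m)" for m
  have weighted: "(\<lambda>m. (cmod (b m))\<^sup>2 * (max 1 \<bar>real_of_int m\<bar>) ^ (2 * k)) summable_on UNIV"
    unfolding b_def by (rule weighted_summable[OF bessel_summable(1)[OF f]])
  have "(\<lambda>m. (cmod (b m))\<^sup>2) summable_on UNIV"
  proof (rule summable_on_comparison_test[OF weighted])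
    fix m :: int
    have "(cmod (b m))\<^sup>2 * 1 \<le> (cmod (b m))\<^sup>2 * (max 1 \<bar>real_of_int m\<bar>) ^ (2 * k)"
      by (intro mult_left_mono) auto
    then show "(cmod (b m))\<^sup>2 \<le> (cmod (b m))\<^sup>2 * (max 1 \<bar>real_of_int m\<bar>) ^ (2 * k)" by simp
  qed simp
  from riesz_fischer[OF this] obtain u where u: "u \<in> L2T" "\<forall>m. fcoeff u m = b m"
    by blast
  have uH: "u \<in> HsT k" using u weighted by (simp add: HsT_def)
  have "fcoeff (G u) m = fcoeff f m" for m
  proof (cases "m \<in> W")
    case True
    have "fcoeff (G u) m = (\<Sum>n\<in>W. \<Sum>l\<in>W. B m n * C n l * fcoeff f l)"
      using fcoeff_G_inside[OF uH True] u(2) by (simp add: b_def sum_distrib_left mult.assoc)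
    also have "\<dots> = (\<Sum>l\<in>W. (\<Sum>n\<in>W. B m n * C n l) * fcoeff f l)"
      by (subst sum.swap) (simp add: sum_distrib_right)
    also have "\<dots> = (\<Sum>l\<in>W. (if l = m then fcoeff f m else 0))"
      using C(1)[OF True] by (intro sum.cong) auto
    also have "\<dots> = fcoeff f m"
      using True finite_W by simp
    finally show ?thesis .
  next
    case False
    then show ?thesis using fcoeff_G_outside[OF uH False] u(2) d_nonzero[OF False] by (simp add: b_def)
  qed
  then have "AE x in \<mu>. G u x = f x"
    by (intro AE_eq_if_fcoeff_eq L2T_integrable G_L2T uH f) simp
  then show ?thesis using uH by (auto simp: aeqT_iff_AE)
qed

lemma bounded_below: "\<exists>K. \<forall>u\<in>HsT k. l2normT u \<le> K * l2normT (G u)"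
proof -
  obtain C where C: "\<And>m l. m \<in> W \<Longrightarrow> l \<in> W \<Longrightarrow> (\<Sum>w\<in>W. B m w * C w l) = (if m = l then 1 else 0)"
    "\<And>m l. m \<in> W \<Longrightarrow> l \<in> W \<Longrightarrow> (\<Sum>w\<in>W. C m w * B w l) = (if m = l then 1 else 0)"
    by (rule B_inverse) blast
  obtain K where K: "K \<ge> 0" "\<And>x y. (\<And>m. m \<in> W \<Longrightarrow> x m = (\<Sum>l\<in>W. C m l * y l)) \<Longrightarrow>
       (\<Sum>m\<in>W. (cmod (x m))\<^sup>2) \<le> K * (\<Sum>l\<in>W. (cmod (y l))\<^sup>2)"
    using finite_matrix_bound[OF finite_W] by blast
  have "l2normT u \<le> sqrt (max 1 K) * l2normT (G u)" if u: "u \<in> HsT k" for u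
  proof -
    define x where "x = fcoeff u"
    define y where "y = fcoeff (G u)"
    have inside: "x m = (\<Sum>l\<in>W. C m l * y l)" if "m \<in> W" for m
    proof -
      have "(\<Sum>l\<in>W. C m l * y l) = (\<Sum>l\<in>W. \<Sum>n\<in>W. C m l * B l n * x n)"
        using fcoeff_G_inside[OF u] by (simp add: x_def y_def sum_distrib_left mult.assoc)
      also have "\<dots> = (\<Sum>n\<in>W. (\<Sum>l\<in>W. C m l * B l n) * x n)"
        by (subst sum.swap) (simp add: sum_distrib_right)
      also have "\<dots> = (\<Sum>n\<in>W. (if n = m then x m else 0))"
        using C(2)[OF that] by (intro sum.cong) auto
      also have "\<dots> = x m"
        using that finite_W by simp
      finally show ?thesis by simp
    qed
    have outside: "(cmod (x m))\<^sup>2 \<le> (cmod (y m))\<^sup>2" if "m \<notin> W" for m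
    proof -
      have "cmod (x m) \<le> cmod (d m) * cmod (x m)"
        using d_ge_1[OF that] by (simp add: mult_le_cancel_right1)
      then show ?thesis
        using fcoeff_G_outside[OF u that] by (simp add: x_def y_def norm_mult power_mono)
    qed
    have u2: "u \<in> L2T" and Gu: "G u \<in> L2T" using HsT_L2T[OF u] G_L2T[OF u] .
    note sx = bessel_summable(1)[OF u2, folded x_def] and sy = bessel_summable(1)[OF Gu, folded y_def]
    have "infsum (\<lambda>m. (cmod (x m))\<^sup>2) UNIV \<le> max 1 K * infsum (\<lambda>m. (cmod (y m))\<^sup>2) UNIV"
      by (rule infsum_le_if_blockwise_le[OF finite_W sx sy _ K(2)[of x y, OF inside] outside]) simp
    then have "integral\<^sup>L \<mu> (\<lambda>x. (cmod (u x))\<^sup>2) \<le> max 1 K * integral\<^sup>L \<mu> (\<lambda>x. (cmod (G u x))\<^sup>2)"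
      using parseval[OF u2] parseval[OF Gu] by (simp add: x_def y_def)
    then show ?thesis
      unfolding l2normT_eq by (metis real_sqrt_le_mono real_sqrt_mult)
  qed
  then show ?thesis by blast
qed

end

section \<open>The spectrum of the Galerkin-truncated operator\<close>

lemma sum_diagonal_plus:
  fixes x A :: "int \<Rightarrow> complex"
  assumes "finite W" "m \<in> W"
  shows "(\<Sum>n\<in>W. ((if m = n then s else 0) + A n) * x n) = s * x m + (\<Sum>n\<in>W. x n * A n)"
proof -
  have "(\<Sum>n\<in>W. ((if m = n then s else 0) + A n) * x n)
      = (\<Sum>n\<in>W. if n = m then s * x m else 0) + (\<Sum>n\<in>W. x n * A n)"
    unfolding sum.distrib[symmetric] by (intro sum.cong) (auto simp: algebra_simps)
  then show ?thesis using assms by simp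
qed

lemma eigenvalue_in_spectrumL2:
  assumes "z \<in> eigs_on (\<lambda>u \<theta>. L0op q k c u \<theta> + projN N (L1op p a u) \<theta>) (ranP N)"
  shows "z \<in> spectrumL2 (\<lambda>u \<theta>. L0op q k c u \<theta> + projN N (L1op p a (projN N u)) \<theta>) (HsT k)"
proof -
  obtain u where u: "u \<in> ranP N" "\<not> aeqT u (\<lambda>_. 0)"
    "aeqT (\<lambda>\<theta>. L0op q k c u \<theta> + projN N (L1op p a u) \<theta>) (\<lambda>\<theta>. z * u \<theta>)"
    using assms unfolding eigs_on_def by blast
  then have "aeqT (\<lambda>\<theta>. L0op q k c u \<theta> + projN N (L1op p a (projN N u)) \<theta> - z * u \<theta>) (\<lambda>_. 0)"
    by (simp add: projN_ranP aeqT_iff_AE)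
  then show ?thesis
    using u(2) ranP_HsT[OF u(1)] unfolding spectrumL2_def by blast
qed

text \<open>A kernel vector of the block would give a trigonometric polynomial eigenfunction.\<close>
lemma coupling_block_injective:
  assumes a: "\<forall>j\<le>p. a j \<in> L2T"
    and not_eig: "z \<notin> eigs_on (\<lambda>u \<theta>. L0op q k c u \<theta> + projN N (L1op p a u) \<theta>) (ranP N)"
    and x: "\<forall>m\<in>freq_window N. (\<Sum>n\<in>freq_window N.
              ((if m = n then symbol q k c m - z else 0) + coupling p a m n) * x n) = 0"
  shows "\<forall>n\<in>freq_window N. x n = 0"
proof -
  define v where "v = (\<lambda>\<theta>. \<Sum>n\<in>freq_window N. x n * ebasis n \<theta>)"
  have v: "v \<in> ranP N" "v \<in> HsT k" "projN N v = v"
    unfolding v_def ranP_eq by (auto intro: trig_sum_HsT simp: projN_trig_sum)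
  have fcoeff_v: "fcoeff v n = (if n \<in> freq_window N then x n else 0)" for n
    unfolding v_def by (rule fcoeff_trig_sum) simp
  define G where "G = (\<lambda>\<theta>. L0op q k c v \<theta> + projN N (L1op p a (projN N v)) \<theta> - z * v \<theta>)"
  have "fcoeff G m = 0" for m
  proof (cases "m \<in> freq_window N")
    case True
    have "fcoeff G m = (symbol q k c m - z) * x m + (\<Sum>n\<in>freq_window N. x n * coupling p a m n)"
      using fcoeff_LN_shifted(2)[OF a v(2), of q c N z m] True by (simp add: G_def fcoeff_v cong: sum.cong)
    also have "\<dots> = (\<Sum>n\<in>freq_window N. ((if m = n then symbol q k c m - z else 0) + coupling p a m n) * x n)"
      by (rule sum_diagonal_plus[symmetric, OF finite_freq_window True])
    also have "\<dots> = 0" using x True by blast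
    finally show ?thesis .
  next
    case False
    then show ?thesis
      using fcoeff_LN_shifted(2)[OF a v(2), of q c N z m] by (simp add: G_def fcoeff_v)
  qed
  then have "AE \<theta> in \<mu>. G \<theta> = 0"
    using fourier_unique[OF L2T_integrable[OF fcoeff_LN_shifted(1)[OF a v(2)]]] by (simp add: G_def)
  then have "aeqT (\<lambda>\<theta>. L0op q k c v \<theta> + projN N (L1op p a v) \<theta>) (\<lambda>\<theta>. z * v \<theta>)"
    unfolding aeqT_iff_AE G_def v(3) by (auto elim: eventually_mono)
  then have "aeqT v (\<lambda>_. 0)" using not_eig v(1) unfolding eigs_on_def by blast
  then have "fcoeff v n = 0" for n
    by (rule fcoeff_eq_0_if_aeqT_0[OF L2T_measurable[OF HsT_L2T[OF v(2)]]])
  then show ?thesis using fcoeff_v by metis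
qed

lemma not_in_spectrumL2_if_not_eigenvalue:
  assumes a: "\<forall>j\<le>p. a j \<in> L2T" and c: "c k \<noteq> 0" "q \<le> k" "k \<ge> 1"
    and gap: "\<And>m. m \<notin> freq_window N \<Longrightarrow> 1 \<le> cmod (symbol q k c m - z)"
    and not_eig: "z \<notin> eigs_on (\<lambda>u \<theta>. L0op q k c u \<theta> + projN N (L1op p a u) \<theta>) (ranP N)"
  shows "z \<notin> spectrumL2 (\<lambda>u \<theta>. L0op q k c u \<theta> + projN N (L1op p a (projN N u)) \<theta>) (HsT k)"
proof -
  obtain R \<beta> where growth: "\<beta> > 0"
    "\<And>m. R \<le> \<bar>real_of_int m\<bar> \<Longrightarrow> \<beta> * \<bar>real_of_int m\<bar> ^ k \<le> cmod (symbol q k c m - z)"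
    using symbol_shift_growth[of c k q z, OF c] by blast
  interpret block_fourier_operator k
    "\<lambda>u \<theta>. L0op q k c u \<theta> + projN N (L1op p a (projN N u)) \<theta> - z * u \<theta>" "freq_window N"
    "\<lambda>m n. (if m = n then symbol q k c m - z else 0) + coupling p a m n" "\<lambda>m. symbol q k c m - z" \<beta> R
  proof
    fix u m assume u: "u \<in> HsT k"
    show "(\<lambda>\<theta>. L0op q k c u \<theta> + projN N (L1op p a (projN N u)) \<theta> - z * u \<theta>) \<in> L2T"
      by (rule fcoeff_LN_shifted(1)[OF a u])
    show "fcoeff (\<lambda>\<theta>. L0op q k c u \<theta> + projN N (L1op p a (projN N u)) \<theta> - z * u \<theta>) m =
        (\<Sum>n\<in>freq_window N. ((if m = n then symbol q k c m - z else 0) + coupling p a m n) * fcoeff u n)"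
      if "m \<in> freq_window N"
      using that fcoeff_LN_shifted(2)[OF a u] sum_diagonal_plus[OF finite_freq_window that] by simp
    show "fcoeff (\<lambda>\<theta>. L0op q k c u \<theta> + projN N (L1op p a (projN N u)) \<theta> - z * u \<theta>) m =
        (symbol q k c m - z) * fcoeff u m" if "m \<notin> freq_window N"
      using that fcoeff_LN_shifted(2)[OF a u] by simp
  qed (use coupling_block_injective[OF a not_eig] gap growth in auto)
  show ?thesis
    unfolding spectrumL2_def using surjective injective bounded_below by auto
qed

lemma eigs_on_eq_spectrumL2_on:
  assumes a: "\<forall>j\<le>p. a j \<in> L2T" and c: "c k \<noteq> 0" "q \<le> k" "k \<ge> 1"
    and gap: "\<And>z m. z \<in> D \<Longrightarrow> m \<notin> freq_window N \<Longrightarrow> 1 \<le> cmod (symbol q k c m - z)"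
  shows "eigs_on (\<lambda>u \<theta>. L0op q k c u \<theta> + projN N (L1op p a u) \<theta>) (ranP N) \<inter> D
       = spectrumL2 (\<lambda>u \<theta>. L0op q k c u \<theta> + projN N (L1op p a (projN N u)) \<theta>) (HsT k) \<inter> D"
proof (intro equalityI subsetI)
  fix z assume "z \<in> eigs_on (\<lambda>u \<theta>. L0op q k c u \<theta> + projN N (L1op p a u) \<theta>) (ranP N) \<inter> D"
  then show "z \<in> spectrumL2 (\<lambda>u \<theta>. L0op q k c u \<theta> + projN N (L1op p a (projN N u)) \<theta>) (HsT k) \<inter> D"
    using eigenvalue_in_spectrumL2 by blast
next
  fix z assume z: "z \<in> spectrumL2 (\<lambda>u \<theta>. L0op q k c u \<theta> + projN N (L1op p a (projN N u)) \<theta>) (HsT k) \<inter> D"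
  then show "z \<in> eigs_on (\<lambda>u \<theta>. L0op q k c u \<theta> + projN N (L1op p a u) \<theta>) (ranP N) \<inter> D"
    using not_in_spectrumL2_if_not_eigenvalue[OF a c gap] by blast
qed

theorem mainTheorem11:
  fixes k p q ell :: nat and c :: "nat \<Rightarrow> complex" and a :: "nat \<Rightarrow> real \<Rightarrow> complex"
  assumes "k \<ge> 1" and "p < k" and "q \<le> k" and "ell \<ge> 1" and "c k \<noteq> 0"
    and "\<forall>j\<le>p. a j \<in> HsT ell"
  shows "\<forall>c0>0. \<forall>\<^sub>F N in sequentially.
    eigs_on (\<lambda>u \<theta>. L0op q k c u \<theta> + projN N (L1op p a u) \<theta>) (ranP N)
      \<inter> {z. cmod z \<le> c0 * real N ^ (k - 1)}
    = spectrumL2 (\<lambda>u \<theta>. L0op q k c u \<theta> + projN N (L1op p a (projN N u)) \<theta>) (HsT k)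
      \<inter> {z. cmod z \<le> c0 * real N ^ (k - 1)}"
proof (intro allI impI)
  fix c0 :: real
  have a: "\<forall>j\<le>p. a j \<in> L2T" using assms(6) HsT_L2T by blast
  obtain N0 where N0: "\<And>N m. N0 \<le> N \<Longrightarrow> m \<notin> freq_window N \<Longrightarrow> c0 * real N ^ (k-1) + 1 \<le> cmod (symbol q k c m)"
    using symbol_large_outside_window[of c k q c0] assms(5,3,1) by blast
  have "1 \<le> cmod (symbol q k c m - z)"
    if "N0 \<le> N" "z \<in> {z. cmod z \<le> c0 * real N ^ (k - 1)}" "m \<notin> freq_window N" for N z m
    using N0[OF that(1,3)] norm_triangle_ineq2[of "symbol q k c m" z] that(2) by simp
  then show "\<forall>\<^sub>F N in sequentially.
    eigs_on (\<lambda>u \<theta>. L0op q k c u \<theta> + projN N (L1op p a u) \<theta>) (ranP N)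
      \<inter> {z. cmod z \<le> c0 * real N ^ (k - 1)}
    = spectrumL2 (\<lambda>u \<theta>. L0op q k c u \<theta> + projN N (L1op p a (projN N u)) \<theta>) (HsT k)
      \<inter> {z. cmod z \<le> c0 * real N ^ (k - 1)}"
    unfolding eventually_sequentially using eigs_on_eq_spectrumL2_on[where p=p and a=a and c=c and k=k and q=q, OF a assms(5,3,1)] by blast
qed

end
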